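(* Let $n\mid(q+1)$, let $\delta\ge2$ be even, and let $b,s,m$ be positive integers with $\gcd(b,n)=1$. Let $t\in\{0,\dots,n-1\}$ and let $i_1<\dots<i_s$ be integers with $m-1+\delta\le i_1$, $i_s\le n-\delta$ and $i_{\ell+1}-i_\ell\ge\delta$ for $\ell=1,\dots,s-1$. Put $$A=\{\alpha^{t},\alpha^{t+b},\dots,\alpha^{t+(m-1)b},\alpha^{t+i_1b},\dots,\alpha^{t+i_sb}\},\qquad B=\{\alpha^{jb}: -\tfrac{\delta-2}{2}\le j\le\tfrac{\delta-2}{2}\}.$$ Suppose $\{j:\alpha^j\in AB\}$ is a union of $q$-cyclotomic cosets modulo $n$. Let $d_A^{\perp}$ be the minimum distance of the dual of the cyclic code of length $n$ over $\mathbb{F}_{q^2}$ with complete defining set $A$. Then $C_{AB}$ is a cyclic $(d_A^{\perp}-\delta+1,\delta)$-LRC of length $n$ over $\mathbb{F}_q$ with dimension $k=n-m+1-(s+1)(\delta-1)$. Moreover, if $\lceil k/r\rceil=s+1$ where $r=d_A^{\perp}-\delta+1$, then $C_{AB}$ is an optimal $(r,\delta)$-LRC with minimum distance $m+\delta-1$.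
   Context: Let $q$ be a prime power and $n\mid(q+1)$, so the multiplicative order of $q$ modulo $n$ divides $2$ and the set $R_n$ of all $n$-th roots of unity lies in $\mathbb{F}_{q^2}$; let $\alpha\in\mathbb{F}_{q^2}$ be a primitive $n$-th root of unity. For $A,B\subseteq R_n$, $AB=\{\beta\gamma:\beta\in A,\gamma\in B\}$. For $Z\subseteq R_n$, the cyclic code of length $n$ over $\mathbb{F}_{q^2}$ with complete defining set $Z$ is the ideal generated by $\prod_{\beta\in Z}(x-\beta)$ in $\mathbb{F}_{q^2}[x]/(x^n-1)$; if $\{j:\alpha^j\in Z\}$ is a union of $q$-cyclotomic cosets modulo $n$ (equivalently here, closed under $j\mapsto -j \bmod n$), this polynomial lies in $\mathbb{F}_q[x]$ and $C_Z$ denotes the cyclic code of length $n$ over $\mathbb{F}_q$ it generates in $\mathbb{F}_q[x]/(x^n-1)$ (dimension $n-|Z|$). Locality: for a linear code $C\subseteq\mathbb{F}_q^n$ and integers $r\ge1$, $\delta\ge2$, the $i$-th coordinate has $(r,\delta)$-locality if there is $S_i\subseteq\{1,\dots,n\}$ with $i\in S_i$, $|S_i|\le r+\delta-1$ such that the punctured code $C|_{S_i}$ has minimum distance at least $\delta$; $C$ is an $(r,\delta)$-LRC if every coordinate has $(r,\delta)$-locality. An $[n,k,d]$ $(r,\delta)$-LRC is optimal if $d=n-k-(\lceil k/r\rceil-1)(\delta-1)+1$ (always an upper bound on $d$). *)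

theory Defs
  imports "HOL-Computational_Algebra.Polynomial" "HOL-Computational_Algebra.Primes"
begin

text \<open>Vectors of length n are functions nat => 'a (coordinates 0..n-1 used).
  The big field F_{q^2} is a finite field type 'a with CARD('a) = q^2; the
  subfield F_q is the fixed field {x. x^q = x} of the Frobenius.\<close>

definition in_subfield :: "nat \<Rightarrow> 'a::field \<Rightarrow> bool" where
  "in_subfield q x \<longleftrightarrow> x ^ q = x"

definition rpow :: "'a::field \<Rightarrow> nat \<Rightarrow> int \<Rightarrow> 'a" where
  "rpow \<alpha> n j = \<alpha> ^ nat (j mod int n)"

definition setmult :: "'a::times set \<Rightarrow> 'a set \<Rightarrow> 'a set" where
  "setmult A B = {x * y | x y. x \<in> A \<and> y \<in> B}"

definition gen_poly :: "'a::field set \<Rightarrow> 'a poly" where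
  "gen_poly Z = (\<Prod>\<beta>\<in>Z. [:- \<beta>, 1:])"

definition cyc_code_ext :: "nat \<Rightarrow> 'a::field set \<Rightarrow> (nat \<Rightarrow> 'a) set" where
  "cyc_code_ext n Z = (\<lambda>c. coeff c) ` {(gen_poly Z * f) mod (monom 1 n - 1) | f. True}"

definition cyc_code_sub :: "nat \<Rightarrow> nat \<Rightarrow> 'a::field set \<Rightarrow> (nat \<Rightarrow> 'a) set" where
  "cyc_code_sub q n Z = (\<lambda>c. coeff c) `
     {(gen_poly Z * f) mod (monom 1 n - 1) | f. \<forall>i. in_subfield q (coeff f i)}"

definition dual_code :: "nat \<Rightarrow> (nat \<Rightarrow> 'a::field) set \<Rightarrow> (nat \<Rightarrow> 'a) set" where
  "dual_code n D = {y. (\<forall>i\<ge>n. y i = 0) \<and> (\<forall>x\<in>D. (\<Sum>i<n. x i * y i) = 0)}"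

definition hdist :: "nat set \<Rightarrow> (nat \<Rightarrow> 'a) \<Rightarrow> (nat \<Rightarrow> 'a) \<Rightarrow> nat" where
  "hdist I x y = card {i\<in>I. x i \<noteq> y i}"

definition min_dist :: "nat \<Rightarrow> (nat \<Rightarrow> 'a) set \<Rightarrow> nat" where
  "min_dist n C = Inf {hdist {..<n} x y | x y. x \<in> C \<and> y \<in> C \<and> x \<noteq> y}"

definition puncture :: "nat set \<Rightarrow> (nat \<Rightarrow> 'a::zero) set \<Rightarrow> (nat \<Rightarrow> 'a) set" where
  "puncture S C = (\<lambda>c j. if j \<in> S then c j else 0) ` C"

text \<open>"the punctured code C|_S has minimum distance at least delta"
  (vacuous if C|_S has a single codeword, i.e. minimum over the empty set is infinite).\<close>
definition min_dist_ge :: "nat set \<Rightarrow> (nat \<Rightarrow> 'a) set \<Rightarrow> nat \<Rightarrow> bool" where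
  "min_dist_ge S C \<delta> \<longleftrightarrow> (\<forall>x\<in>C. \<forall>y\<in>C. x \<noteq> y \<longrightarrow> hdist S x y \<ge> \<delta>)"

definition has_locality :: "nat \<Rightarrow> (nat \<Rightarrow> 'a::zero) set \<Rightarrow> nat \<Rightarrow> nat \<Rightarrow> nat \<Rightarrow> bool" where
  "has_locality n C r \<delta> i \<longleftrightarrow>
     (\<exists>S. S \<subseteq> {..<n} \<and> i \<in> S \<and> card S \<le> r + \<delta> - 1 \<and> min_dist_ge S (puncture S C) \<delta>)"

definition is_LRC :: "nat \<Rightarrow> (nat \<Rightarrow> 'a::zero) set \<Rightarrow> nat \<Rightarrow> nat \<Rightarrow> bool" where
  "is_LRC n C r \<delta> \<longleftrightarrow> r \<ge> 1 \<and> \<delta> \<ge> 2 \<and> (\<forall>i<n. has_locality n C r \<delta> i)"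

definition is_optimal_LRC :: "nat \<Rightarrow> (nat \<Rightarrow> 'a::zero) set \<Rightarrow> nat \<Rightarrow> nat \<Rightarrow> nat \<Rightarrow> nat \<Rightarrow> bool" where
  "is_optimal_LRC n C k r \<delta> d \<longleftrightarrow> is_LRC n C r \<delta> \<and>
     int d = int n - int k - (\<lceil>real k / real r\<rceil> - 1) * (int \<delta> - 1) + 1"

end

(*
  Because A B is closed under the Frobenius x |-> x^q, its generator polynomial g has coefficients
  in F_q, so C_AB consists of the words g u with u over F_q of degree < n - |A B| and has
  q^(n - |A B|) elements.  The exponents j with alpha^(t + j b) in A B form the run
  -h, ..., m - 1 + h and s disjoint runs i_l - h, ..., i_l + h, where h = (delta - 2)/2; this gives
  |A B|, and the first run gives d >= m + delta - 1 by the BCH bound.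

  For locality, take a minimum-weight word y of the dual of the code with defining set A, shifted
  cyclically to cover a given coordinate.  Since A times every element of B lies in A B, the
  componentwise product of y with any c in C_AB has the delta - 1 consecutive zeros
  alpha^(x b), |x| <= h, so by the BCH bound c vanishes on the support of y unless it has at least
  delta non-zeros there.  The support has d_A = r + delta - 1 elements, and d_A >= delta because
  the exponents m, ..., m + delta - 2 avoid A.

  Finally, the Singleton-type bound d <= n - k - (ceil(k/r) - 1)(delta - 1) + 1 for
  (r, delta)-LRCs, proved by greedily shortening along repair sets, equals m + delta - 1 when
  ceil(k/r) = s + 1.
*)
theory Submission
  imports Defs "HOL-Number_Theory.Residues"
begin

(* HOL-Algebra, imported with Residues, has record fields that would shadow coeff and monom. *)
hide_const (open) up_ring.monom up_ring.coeff

section \<open>Words, weights and cyclic codes\<close>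

definition eval_word :: "nat \<Rightarrow> (nat \<Rightarrow> 'a::comm_semiring_1) \<Rightarrow> 'a \<Rightarrow> 'a" where
  "eval_word n v x = (\<Sum>l<n. v l * x ^ l)"

definition weight :: "nat set \<Rightarrow> (nat \<Rightarrow> 'a::zero) \<Rightarrow> nat" where
  "weight S v = card {l\<in>S. v l \<noteq> 0}"

lemma hdist_eq_weight: "hdist S x y = weight S (\<lambda>l. x l - y l :: 'a::ab_group_add)"
  by (simp add: hdist_def weight_def)

lemma min_dist_le_weight:
  fixes C :: "(nat \<Rightarrow> 'a::ab_group_add) set"
  assumes "(\<lambda>_. 0) \<in> C" "c \<in> C" "c \<noteq> (\<lambda>_. 0)"
  shows "min_dist n C \<le> weight {..<n} c"
proof -
  have "min_dist n C \<le> hdist {..<n} c (\<lambda>_. 0)"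
    unfolding min_dist_def by (rule wellorder_Inf_le1) (use assms in blast)
  thus ?thesis
    by (simp add: hdist_eq_weight)
qed

lemma min_dist_attained:
  fixes C :: "(nat \<Rightarrow> 'a::ab_group_add) set"
  assumes diff: "\<And>x y. x \<in> C \<Longrightarrow> y \<in> C \<Longrightarrow> (\<lambda>l. x l - y l) \<in> C"
    and "x \<in> C" "y \<in> C" "x \<noteq> y"
  shows "\<exists>z\<in>C. z \<noteq> (\<lambda>_. 0) \<and> weight {..<n} z = min_dist n C"
proof -
  let ?D = "{hdist {..<n} x y | x y. x \<in> C \<and> y \<in> C \<and> x \<noteq> y}"
  have "min_dist n C \<in> ?D"
    unfolding min_dist_def by (rule Inf_nat_def1) (use assms in blast)
  then obtain x' y' where "x' \<in> C" "y' \<in> C" "x' \<noteq> y'" "min_dist n C = hdist {..<n} x' y'"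
    by blast
  moreover have "(\<lambda>l. x' l - y' l) \<noteq> (\<lambda>_. 0)"
    using \<open>x' \<noteq> y'\<close> by (auto simp: fun_eq_iff)
  ultimately show ?thesis
    using diff by (metis hdist_eq_weight)
qed

lemma poly_eq_eval_word:
  assumes "degree P < n"
  shows "poly P x = eval_word n (coeff P) x"
proof -
  have "poly P x = (\<Sum>i\<le>degree P. coeff P i * x ^ i)"
    by (rule poly_altdef)
  also have "\<dots> = (\<Sum>i<n. coeff P i * x ^ i)"
    by (rule sum.mono_neutral_left) (use assms in \<open>auto simp: coeff_eq_0\<close>)
  finally show ?thesis
    by (simp add: eval_word_def)
qed

lemma gen_poly_dvd:
  fixes P :: "'a::field poly"
  assumes "finite Z" "\<forall>\<beta>\<in>Z. poly P \<beta> = 0"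
  shows "gen_poly Z dvd P"
  using assms
proof (induction Z arbitrary: P rule: finite_induct)
  case empty
  thus ?case by (simp add: gen_poly_def)
next
  case (insert \<beta> Z)
  obtain P' where P': "P = [:-\<beta>, 1:] * P'"
    using insert.prems poly_eq_0_iff_dvd by (metis dvdE insertI1)
  have "\<forall>\<gamma>\<in>Z. poly P' \<gamma> = 0"
    using insert P' by auto
  hence "gen_poly Z dvd P'"
    using insert.IH by blast
  hence "[:-\<beta>, 1:] * gen_poly Z dvd P"
    unfolding P' by (rule mult_dvd_mono[OF dvd_refl])
  thus ?case
    using insert.hyps by (simp add: gen_poly_def)
qed

lemma poly_gen_poly_eq_0: "finite Z \<Longrightarrow> \<beta> \<in> Z \<Longrightarrow> poly (gen_poly Z) \<beta> = 0"
  by (simp add: gen_poly_def poly_prod prod_zero_iff)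

lemma gen_poly_nonzero: "gen_poly (Z::'a::field set) \<noteq> 0"
  unfolding gen_poly_def by (cases "finite Z") (simp_all add: prod_zero_iff)

lemma degree_gen_poly: "finite Z \<Longrightarrow> degree (gen_poly (Z::'a::field set)) = card Z"
  by (simp add: gen_poly_def degree_prod_eq_sum_degree)

lemma degree_monom_1_minus_1: "n > 0 \<Longrightarrow> degree (monom (1::'a::field) n - 1) = n"
  by (metis (no_types) degree_add_eq_left degree_monom_eq degree_1 diff_conv_add_uminus
      degree_minus one_neq_zero)

lemma gen_poly_dvd_monom_1_minus_1:
  "finite Z \<Longrightarrow> \<forall>\<beta>\<in>Z. \<beta> ^ n = 1 \<Longrightarrow> gen_poly (Z::'a::field set) dvd monom 1 n - 1"
  by (rule gen_poly_dvd) (simp_all add: poly_monom)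

lemma cyc_code_ext_subset_zeros:
  fixes Z :: "'a::field set"
  assumes n: "n > 0" and fin: "finite Z" and roots: "\<forall>\<beta>\<in>Z. \<beta> ^ n = 1"
  shows "cyc_code_ext n Z \<subseteq> {v. (\<forall>l\<ge>n. v l = 0) \<and> (\<forall>\<beta>\<in>Z. eval_word n v \<beta> = 0)}"
proof
  let ?N = "monom (1::'a) n - 1"
  have degN: "degree ?N = n"
    using n by (rule degree_monom_1_minus_1)
  fix v
  assume "v \<in> cyc_code_ext n Z"
  then obtain f where v: "v = coeff ((gen_poly Z * f) mod ?N)"
    by (auto simp: cyc_code_ext_def)
  define P where "P = (gen_poly Z * f) mod ?N"
  have "?N \<noteq> 0"
    using degN n by auto
  hence deg: "degree P < n"
    using degree_mod_less[of ?N "gen_poly Z * f"] degN n by (auto simp: P_def)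
  have dvd: "gen_poly Z dvd P"
    unfolding P_def using gen_poly_dvd_monom_1_minus_1[OF fin roots] by (simp add: dvd_mod)
  have "eval_word n v \<beta> = 0" if "\<beta> \<in> Z" for \<beta>
  proof -
    have "eval_word n v \<beta> = poly P \<beta>"
      using poly_eq_eval_word[OF deg] by (simp add: v P_def)
    also have "\<dots> = 0"
      using dvd poly_gen_poly_eq_0[OF fin that] by (auto elim!: dvdE)
    finally show ?thesis .
  qed
  with deg show "v \<in> {v. (\<forall>l\<ge>n. v l = 0) \<and> (\<forall>\<beta>\<in>Z. eval_word n v \<beta> = 0)}"
    by (auto simp: v P_def[symmetric] coeff_eq_0)
qed

lemma zeros_subset_cyc_code_ext:
  fixes Z :: "'a::field set"
  assumes n: "n > 0" and fin: "finite Z"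
  shows "{v. (\<forall>l\<ge>n. v l = 0) \<and> (\<forall>\<beta>\<in>Z. eval_word n v \<beta> = 0)} \<subseteq> cyc_code_ext n Z"
proof
  fix v
  assume v: "v \<in> {v. (\<forall>l\<ge>n. v l = 0) \<and> (\<forall>\<beta>\<in>Z. eval_word n v \<beta> = 0)}"
  define P where "P = (\<Sum>l<n. monom (v l) l)"
  have coeff_P: "coeff P = v"
    using v by (auto simp: P_def coeff_sum coeff_monom fun_eq_iff)
  have "degree P \<le> n - 1"
    using v n by (intro degree_le) (auto simp: coeff_P)
  hence "P mod (monom 1 n - 1) = P"
    using n by (intro mod_poly_less) (simp add: degree_monom_1_minus_1)
  moreover have "gen_poly Z dvd P"
    using v by (intro gen_poly_dvd fin) (simp add: P_def eval_word_def poly_sum poly_monom)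
  ultimately show "v \<in> cyc_code_ext n Z"
    unfolding cyc_code_ext_def by (metis (mono_tags, lifting) coeff_P dvdE image_eqI mem_Collect_eq)
qed

lemma cyc_code_ext_eq_zeros:
  fixes Z :: "'a::field set"
  assumes "n > 0" and "finite Z" and "\<forall>\<beta>\<in>Z. \<beta> ^ n = 1"
  shows "cyc_code_ext n Z = {v. (\<forall>l\<ge>n. v l = 0) \<and> (\<forall>\<beta>\<in>Z. eval_word n v \<beta> = 0)}"
  using cyc_code_ext_subset_zeros[OF assms] zeros_subset_cyc_code_ext[OF assms(1,2)] by (rule subset_antisym)

text \<open>Evaluate the relation against the polynomial vanishing at all \<open>\<gamma> l\<close> except \<open>\<gamma> l0\<close>.\<close>
lemma vandermonde_solution_zero:
  fixes u \<gamma> :: "nat \<Rightarrow> 'a::field"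
  assumes fin: "finite T" and inj: "inj_on \<gamma> T" and card: "card T \<le> N"
    and sums: "\<forall>j<N. (\<Sum>l\<in>T. u l * \<gamma> l ^ j) = 0" and l0: "l0 \<in> T"
  shows "u l0 = 0"
proof -
  define P where "P = (\<Prod>l\<in>T-{l0}. [:-\<gamma> l, 1:])"
  have "degree P = card T - 1"
    using fin l0 by (simp add: P_def degree_prod_eq_sum_degree)
  moreover have "card T > 0"
    using fin l0 by (auto simp: card_gt_0_iff)
  ultimately have deg: "degree P < N"
    using card by linarith
  have "(\<Sum>l\<in>T. u l * poly P (\<gamma> l)) = (\<Sum>l\<in>T. \<Sum>j<N. coeff P j * (u l * \<gamma> l ^ j))"
    by (simp add: poly_eq_eval_word[OF deg] eval_word_def sum_distrib_left mult.left_commute)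
  also have "\<dots> = (\<Sum>j<N. coeff P j * (\<Sum>l\<in>T. u l * \<gamma> l ^ j))"
    by (subst sum.swap) (simp add: sum_distrib_left)
  also have "\<dots> = 0"
    using sums by simp
  finally have "(\<Sum>l\<in>T. u l * poly P (\<gamma> l)) = 0" .
  moreover have "poly P (\<gamma> l) = 0" if "l \<in> T - {l0}" for l
    using fin that by (simp add: P_def poly_prod prod_zero_iff) blast
  ultimately have "u l0 * poly P (\<gamma> l0) = 0"
    using fin l0 by (simp add: sum.remove)
  moreover have "poly P (\<gamma> l0) \<noteq> 0"
    using fin inj l0 by (auto simp: P_def poly_prod prod_zero_iff dest: inj_onD)
  ultimately show ?thesis
    by simp
qed

lemma add_mod_add_complement:
  assumes "l < n"
  shows "((l + k) mod n + (n - k mod n)) mod n = (l::nat)"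
proof -
  have "((l + k) mod n + (n - k mod n)) mod n = (l + k + (n - k mod n)) mod n"
    by (simp add: mod_add_left_eq)
  also have "l + k + (n - k mod n) = l + k div n * n + n"
    using assms div_mult_mod_eq[of k n] mod_less_divisor[of n k] by linarith
  also have "(l + k div n * n + n) mod n = l"
    using assms by simp
  finally show ?thesis .
qed

lemma bij_betw_add_mod: "n > 0 \<Longrightarrow> bij_betw (\<lambda>l. (l + k) mod n) {..<n} {..<(n::nat)}"
proof -
  assume "n > 0"
  have "inj_on (\<lambda>l. (l + k) mod n) {..<n}"
    by (rule inj_onI) (metis add_mod_add_complement lessThan_iff)
  moreover have "(\<lambda>l. (l + k) mod n) ` {..<n} = {..<n}"
    using \<open>n > 0\<close> calculation by (intro endo_inj_surj) auto
  ultimately show ?thesis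
    by (simp add: bij_betw_def)
qed

lemma sum_add_mod: "n > 0 \<Longrightarrow> (\<Sum>l<n. F ((l + k) mod n)) = (\<Sum>l<(n::nat). F l)"
  using sum.reindex_bij_betw[OF bij_betw_add_mod] .

lemma power_mod_of_power_eq_1: "(x::'a::monoid_mult) ^ n = 1 \<Longrightarrow> x ^ j = x ^ (j mod n)"
proof -
  assume "x ^ n = 1"
  have "x ^ j = x ^ (n * (j div n) + j mod n)"
    by simp
  also have "\<dots> = (x ^ n) ^ (j div n) * x ^ (j mod n)"
    by (simp only: power_add power_mult)
  finally show ?thesis
    using \<open>x ^ n = 1\<close> by simp
qed

lemma cyc_code_ext_shift:
  fixes Z :: "'a::field set"
  assumes n: "n > 0" and fin: "finite Z" and roots: "\<forall>\<beta>\<in>Z. \<beta> ^ n = 1"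
    and c: "c \<in> cyc_code_ext n Z"
  shows "(\<lambda>l. if l < n then c ((l + k) mod n) else 0) \<in> cyc_code_ext n Z"
  unfolding cyc_code_ext_eq_zeros[OF n fin roots]
proof (intro CollectI conjI allI ballI impI)
  fix \<beta> assume "\<beta> \<in> Z"
  hence "\<beta> ^ n = 1"
    using roots by blast
  have "\<beta> ^ k * eval_word n (\<lambda>l. if l < n then c ((l + k) mod n) else 0) \<beta> =
      (\<Sum>l<n. c ((l + k) mod n) * \<beta> ^ ((l + k) mod n))"
    unfolding eval_word_def sum_distrib_left
  proof (rule sum.cong[OF refl])
    fix l assume "l \<in> {..<n}"
    have "\<beta> ^ k * \<beta> ^ l = \<beta> ^ ((l + k) mod n)"
      using power_mod_of_power_eq_1[OF \<open>\<beta> ^ n = 1\<close>, of "l + k"] by (simp add: power_add mult.commute)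
    thus "\<beta> ^ k * ((if l < n then c ((l + k) mod n) else 0) * \<beta> ^ l) =
        c ((l + k) mod n) * \<beta> ^ ((l + k) mod n)"
      using \<open>l \<in> {..<n}\<close> by (simp add: mult.left_commute)
  qed
  also have "\<dots> = eval_word n c \<beta>"
    using sum_add_mod[OF n] by (simp add: eval_word_def)
  also have "\<dots> = 0"
    using c \<open>\<beta> \<in> Z\<close> by (simp add: cyc_code_ext_eq_zeros[OF n fin roots])
  finally show "eval_word n (\<lambda>l. if l < n then c ((l + k) mod n) else 0) \<beta> = 0"
    using \<open>\<beta> ^ n = 1\<close> n by (metis mult_eq_0_iff power_eq_0_iff zero_neq_one)
qed simp

lemma dual_cyc_code_ext_shift:
  fixes Z :: "'a::field set"
  assumes n: "n > 0" and fin: "finite Z" and roots: "\<forall>\<beta>\<in>Z. \<beta> ^ n = 1"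
    and y: "y \<in> dual_code n (cyc_code_ext n Z)"
  shows "(\<lambda>l. if l < n then y ((l + k) mod n) else 0) \<in> dual_code n (cyc_code_ext n Z)"
  unfolding dual_code_def
proof (intro CollectI conjI allI ballI impI)
  fix c assume c: "c \<in> cyc_code_ext n Z"
  define c' where "c' = (\<lambda>l. if l < n then c ((l + (n - k mod n)) mod n) else 0)"
  have c': "c' \<in> cyc_code_ext n Z"
    unfolding c'_def using n fin roots c by (rule cyc_code_ext_shift)
  have "c' ((l + k) mod n) = c l" if "l < n" for l
    using add_mod_add_complement[OF that, of k] that by (simp add: c'_def)
  hence "(\<Sum>l<n. c l * (if l < n then y ((l + k) mod n) else 0)) =
      (\<Sum>l<n. c' ((l + k) mod n) * y ((l + k) mod n))"
    by simp
  also have "\<dots> = (\<Sum>l<n. c' l * y l)"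
    using sum_add_mod[OF n] .
  also have "\<dots> = 0"
    using y c' by (simp add: dual_code_def)
  finally show "(\<Sum>l<n. c l * (if l < n then y ((l + k) mod n) else 0)) = 0" .
qed simp

lemma zero_in_dual_code: "(\<lambda>_. 0) \<in> dual_code n D"
  by (simp add: dual_code_def)

lemma diff_in_dual_code:
  "x \<in> dual_code n D \<Longrightarrow> y \<in> dual_code n D \<Longrightarrow> (\<lambda>l. x l - y l) \<in> dual_code n D"
  by (simp add: dual_code_def right_diff_distrib sum_subtractf)

lemma min_dist_ge_puncture:
  fixes C :: "(nat \<Rightarrow> 'a::ab_group_add) set"
  assumes diff: "\<And>x y. x \<in> C \<Longrightarrow> y \<in> C \<Longrightarrow> (\<lambda>l. x l - y l) \<in> C"
    and light: "\<forall>c\<in>C. weight S c < \<delta> \<longrightarrow> (\<forall>l\<in>S. c l = 0)"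
  shows "min_dist_ge S (puncture S C) \<delta>"
  unfolding min_dist_ge_def
proof (intro ballI impI)
  fix x y assume "x \<in> puncture S C" "y \<in> puncture S C" "x \<noteq> y"
  then obtain c1 c2 where c: "c1 \<in> C" "c2 \<in> C"
    and x: "x = (\<lambda>j. if j \<in> S then c1 j else 0)" and y: "y = (\<lambda>j. if j \<in> S then c2 j else 0)"
    by (auto simp: puncture_def)
  have "\<not> (\<forall>l\<in>S. c1 l - c2 l = 0)"
    using \<open>x \<noteq> y\<close> by (auto simp: x y fun_eq_iff split: if_splits)
  hence "\<not> weight S (\<lambda>l. c1 l - c2 l) < \<delta>"
    using bspec[OF light diff[OF c]] by blast
  moreover have "hdist S x y = weight S (\<lambda>l. c1 l - c2 l)"
    unfolding hdist_def weight_def x y by (rule arg_cong[where f = card]) auto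
  ultimately show "\<delta> \<le> hdist S x y"
    by simp
qed

section \<open>The subfield of order q of a field of order q^2\<close>

lemma CHAR_eq_prime_of_card:
  assumes "prime p" and "card (UNIV :: 'a::{field,finite} set) = p ^ k"
  shows "CHAR('a) = p"
proof -
  have prime_CHAR: "prime CHAR('a)"
    by (simp add: finite_imp_CHAR_pos prime_CHAR_semidom)
  moreover have "CHAR('a) dvd p ^ k"
    using CHAR_dvd_CARD[where 'a='a] assms(2) by simp
  ultimately have "CHAR('a) dvd p"
    using prime_dvd_power by blast
  with prime_CHAR assms(1) show ?thesis
    by (simp add: primes_dvd_imp_eq)
qed

lemma power_card_UNIV: "(x::'a::{field,finite}) ^ card (UNIV :: 'a set) = x"
proof (cases "x = 0")
  case False
  have "(\<Prod>y\<in>UNIV-{0}. x * y) = (\<Prod>y\<in>UNIV-{0}. y)"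
    by (rule prod.reindex_bij_witness[of _ "\<lambda>y. y / x" "\<lambda>y. x * y"]) (use False in auto)
  moreover have "(\<Prod>y\<in>UNIV-{0}. x * y) = x ^ (card (UNIV :: 'a set) - 1) * \<Prod>(UNIV-{0})"
    by (simp add: prod.distrib)
  ultimately have "x ^ (card (UNIV :: 'a set) - 1) = 1"
    by simp
  moreover have "card (UNIV :: 'a set) = Suc (card (UNIV :: 'a set) - 1)"
    using finite_UNIV_card_ge_0[where 'a='a] by simp
  ultimately show ?thesis
    by (metis power_Suc2 mult_1_left)
qed (simp add: finite_UNIV_card_ge_0)

lemma card_roots_power_eq_linear:
  assumes "2 \<le> k"
  shows "card {x::'a::idom. x ^ k = c * x} \<le> k"
proof -
  let ?P = "monom 1 k - [:0, c:] :: 'a poly"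
  have "coeff [:0, c:] k = 0"
    using assms by (intro coeff_eq_0) simp
  hence "coeff ?P k = 1"
    by (simp add: coeff_monom)
  hence "?P \<noteq> 0"
    by (metis coeff_0 zero_neq_one)
  moreover have "degree ?P \<le> k"
    using assms by (intro degree_diff_le) (simp_all add: degree_monom_le)
  moreover have "{x. x ^ k = c * x} = {x. poly ?P x = 0}"
    by (simp add: poly_monom mult.commute)
  ultimately show ?thesis
    using card_poly_roots_bound[of ?P] by simp
qed

lemma inj_on_Poly_length: "inj_on Poly {xs :: 'a::zero list. length xs = d}"
proof (rule inj_onI)
  fix xs ys :: "'a list"
  assume "xs \<in> {xs. length xs = d}" "ys \<in> {xs. length xs = d}" "Poly xs = Poly ys"
  hence "nth_default 0 xs = nth_default 0 ys" "length xs = length ys"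
    by (metis coeff_Poly_eq, simp)
  thus "xs = ys"
    by (metis nth_default_def nth_equalityI)
qed

locale field_of_order_q2 =
  fixes q p e :: nat and ty :: "'a::{field,finite} itself"
  assumes p_prime: "prime p" and e_pos: "e > 0" and q_eq: "q = p ^ e"
    and card_UNIV: "card (UNIV :: 'a set) = q ^ 2"
begin

lemma CHAR_eq: "CHAR('a) = p"
  using CHAR_eq_prime_of_card[OF p_prime] card_UNIV by (simp add: q_eq power_mult[symmetric])

lemma q_ge_2: "q \<ge> 2"
proof -
  have "p ^ 1 \<le> p ^ e"
    using e_pos prime_gt_0_nat[OF p_prime] by (intro power_increasing) auto
  thus ?thesis
    using prime_ge_2_nat[OF p_prime] q_eq by simp
qed

lemma frobenius_add: "((x::'a) + y) ^ q = x ^ q + y ^ q"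
  by (rule freshmans_dream'[where n = e]) (simp_all add: CHAR_eq p_prime q_eq)

lemma frobenius_sum: "(sum (f :: _ \<Rightarrow> 'a) A) ^ q = (\<Sum>i\<in>A. f i ^ q)"
  by (rule freshmans_dream_sum'[where n = e]) (simp_all add: CHAR_eq p_prime q_eq)

lemma frobenius_zero: "(0::'a) ^ q = 0"
  using q_ge_2 by simp

lemma frobenius_minus: "(- (x::'a)) ^ q = - (x ^ q)"
  using frobenius_add[of x "- x"] frobenius_zero by (simp add: eq_neg_iff_add_eq_0 add.commute)

lemma frobenius_diff: "((x::'a) - y) ^ q = x ^ q - y ^ q"
  using frobenius_add[of x "- y"] frobenius_minus[of y] by simp

lemma frobenius_twice: "((x::'a) ^ q) ^ q = x"
  using power_card_UNIV[of x] card_UNIV by (simp add: power_mult power2_eq_square)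

lemma frobenius_eq_iff: "(x::'a) ^ q = y ^ q \<longleftrightarrow> x = y"
  by (metis frobenius_twice)

definition Fq :: "'a set" where "Fq = {x. in_subfield q x}"

lemma mem_Fq: "x \<in> Fq \<longleftrightarrow> x ^ q = x"
  by (simp add: Fq_def in_subfield_def)

lemma Fq_closed:
  "0 \<in> Fq" "x \<in> Fq \<Longrightarrow> y \<in> Fq \<Longrightarrow> x - y \<in> Fq"
  by (simp_all add: mem_Fq frobenius_zero frobenius_diff)

text \<open>The map \<open>x \<mapsto> x^q - x\<close> is additive with kernel \<open>Fq\<close> and takes values
  among the at most \<open>q\<close> roots of \<open>X^q + X\<close>; hence \<open>q^2 \<le> q \<cdot> |Fq|\<close>.\<close>
lemma card_Fq: "card Fq = q"
proof -
  define \<phi> where "\<phi> = (\<lambda>x::'a. x ^ q - x)"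
  have card_le: "card Fq \<le> q"
    using card_roots_power_eq_linear[OF q_ge_2, of 1] by (simp add: Fq_def in_subfield_def)
  have "range \<phi> \<subseteq> {y. y ^ q = - 1 * y}"
    by (auto simp: \<phi>_def frobenius_diff frobenius_twice)
  hence "card (range \<phi>) \<le> card {y::'a. y ^ q = - 1 * y}"
    by (intro card_mono) simp_all
  hence card_range: "card (range \<phi>) \<le> q"
    using card_roots_power_eq_linear[OF q_ge_2] by (rule order.trans)
  have fibre: "{x. \<phi> x = y} \<subseteq> (\<lambda>z. z + x0) ` Fq" if "\<phi> x0 = y" for x0 y
  proof
    fix x assume "x \<in> {x. \<phi> x = y}"
    hence "(x - x0) ^ q = x - x0"
      using that by (simp add: \<phi>_def frobenius_diff algebra_simps)
    thus "x \<in> (\<lambda>z. z + x0) ` Fq"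
      by (intro image_eqI[of _ _ "x - x0"]) (auto simp: mem_Fq)
  qed
  have "UNIV = (\<Union>y\<in>range \<phi>. {x. \<phi> x = y})"
    by auto
  hence "card (UNIV :: 'a set) \<le> (\<Sum>y\<in>range \<phi>. card {x. \<phi> x = y})"
    by (metis card_UN_le finite)
  also have "\<dots> \<le> (\<Sum>y\<in>range \<phi>. card Fq)"
  proof (intro sum_mono)
    fix y assume "y \<in> range \<phi>"
    then obtain x0 where "\<phi> x0 = y" by blast
    hence "card {x. \<phi> x = y} \<le> card ((\<lambda>z. z + x0) ` Fq)"
      using fibre by (intro card_mono) auto
    also have "\<dots> \<le> card Fq"
      by (rule card_image_le) simp
    finally show "card {x. \<phi> x = y} \<le> card Fq" .
  qed
  also have "\<dots> \<le> q * card Fq"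
    using card_range by simp
  finally have "q * q \<le> q * card Fq"
    using card_UNIV by (simp add: power2_eq_square)
  with card_le q_ge_2 show ?thesis
    by simp
qed

definition frobenius_poly :: "'a poly \<Rightarrow> 'a poly" where
  "frobenius_poly P = map_poly (\<lambda>x. x ^ q) P"

lemma coeff_frobenius_poly: "coeff (frobenius_poly P) i = coeff P i ^ q"
  unfolding frobenius_poly_def by (rule coeff_map_poly) (simp add: frobenius_zero)

lemma degree_frobenius_poly: "degree (frobenius_poly P) = degree P"
  unfolding frobenius_poly_def by (rule degree_map_poly) (simp add: frobenius_eq_iff frobenius_zero)

lemma frobenius_poly_add: "frobenius_poly (P + Q) = frobenius_poly P + frobenius_poly Q"
  by (rule poly_eqI) (simp add: coeff_frobenius_poly frobenius_add)

lemma frobenius_poly_mult: "frobenius_poly (P * Q) = frobenius_poly P * frobenius_poly Q"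
  by (rule poly_eqI) (simp add: coeff_frobenius_poly coeff_mult frobenius_sum power_mult_distrib)

lemma frobenius_poly_1: "frobenius_poly 1 = 1"
  by (rule poly_eqI) (simp add: coeff_frobenius_poly coeff_1 frobenius_zero)

lemma frobenius_poly_prod: "frobenius_poly (\<Prod>i\<in>A. f i) = (\<Prod>i\<in>A. frobenius_poly (f i))"
  by (induction A rule: infinite_finite_induct) (simp_all add: frobenius_poly_1 frobenius_poly_mult)

definition over_Fq :: "'a poly \<Rightarrow> bool" where
  "over_Fq P \<longleftrightarrow> (\<forall>i. coeff P i \<in> Fq)"

lemma over_Fq_iff_frobenius_poly: "over_Fq P \<longleftrightarrow> frobenius_poly P = P"
  by (auto simp: over_Fq_def mem_Fq poly_eq_iff coeff_frobenius_poly)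

lemma over_Fq_mult: "over_Fq P \<Longrightarrow> over_Fq Q \<Longrightarrow> over_Fq (P * Q)"
  by (simp add: over_Fq_iff_frobenius_poly frobenius_poly_mult)

lemma over_Fq_diff: "over_Fq P \<Longrightarrow> over_Fq Q \<Longrightarrow> over_Fq (P - Q)"
  by (simp add: over_Fq_def Fq_closed)

text \<open>Division with remainder commutes with the Frobenius, and quotient and remainder
  are unique.\<close>
lemma over_Fq_div_mod:
  assumes "over_Fq P" "over_Fq H"
  shows "over_Fq (P div H) \<and> over_Fq (P mod H)"
proof (cases "H = 0")
  case False
  define D R where "D = P div H" and "R = P mod H"
  have P: "P = D * H + R"
    by (simp add: D_def R_def)
  have fixed: "frobenius_poly P = P" "frobenius_poly H = H"
    using assms by (simp_all add: over_Fq_iff_frobenius_poly)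
  hence P': "P = frobenius_poly D * H + frobenius_poly R"
    using P by (metis frobenius_poly_add frobenius_poly_mult)
  have "degree (frobenius_poly R) < degree H" if "R \<noteq> 0"
    using degree_mod_less[OF False, of P] that by (simp add: degree_frobenius_poly R_def)
  hence "frobenius_poly R = P mod H"
    using P' by (metis add.commute frobenius_poly_mult mod_mult_self3 mod_poly_less
        mult_zero_left R_def frobenius_poly_def map_poly_0)
  hence R: "frobenius_poly R = R"
    by (simp add: R_def)
  hence "frobenius_poly D * H = D * H"
    using P P' by simp
  hence "frobenius_poly D = D"
    using False by simp
  with R show ?thesis
    by (simp add: over_Fq_iff_frobenius_poly D_def R_def)
qed (use assms in simp)

lemma over_Fq_gen_poly:
  assumes "finite Z" and "(\<lambda>\<beta>. \<beta> ^ q) ` Z \<subseteq> Z"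
  shows "over_Fq (gen_poly Z)"
proof -
  have perm: "(\<lambda>\<beta>. \<beta> ^ q) ` Z = Z"
    using assms by (intro endo_inj_surj) (auto intro: inj_onI simp: frobenius_eq_iff)
  have "frobenius_poly (gen_poly Z) = (\<Prod>\<beta>\<in>Z. [:- (\<beta> ^ q), 1:])"
    unfolding gen_poly_def frobenius_poly_prod
    by (intro prod.cong refl poly_eqI)
      (simp add: coeff_frobenius_poly coeff_pCons frobenius_zero frobenius_minus split: nat.split)
  also have "\<dots> = (\<Prod>\<gamma>\<in>(\<lambda>\<beta>. \<beta> ^ q) ` Z. [:- \<gamma>, 1:])"
    by (rule prod.reindex[symmetric, unfolded comp_def]) (auto intro: inj_onI simp: frobenius_eq_iff)
  finally show ?thesis
    by (simp add: perm gen_poly_def over_Fq_iff_frobenius_poly)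
qed

lemma over_Fq_monom_1_minus_1: "over_Fq (monom 1 n - 1)"
  by (auto simp: over_Fq_def coeff_monom coeff_1 mem_Fq frobenius_zero frobenius_diff)

lemma polys_over_Fq_eq_Poly_image:
  assumes "d > 0"
  shows "{u. over_Fq u \<and> degree u < d} = Poly ` {xs. set xs \<subseteq> Fq \<and> length xs = d}"
proof (intro Set.set_eqI iffI)
  fix u assume u: "u \<in> {u. over_Fq u \<and> degree u < d}"
  have "Poly (map (coeff u) [0..<d]) = u"
  proof (rule poly_eqI)
    fix j
    have "coeff u j = 0" if "j \<ge> d"
      using u that by (intro coeff_eq_0) simp
    thus "coeff (Poly (map (coeff u) [0..<d])) j = coeff u j"
      by (simp add: nth_default_def)
  qed
  moreover have "map (coeff u) [0..<d] \<in> {xs. set xs \<subseteq> Fq \<and> length xs = d}"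
    using u by (auto simp: over_Fq_def)
  ultimately show "u \<in> Poly ` {xs. set xs \<subseteq> Fq \<and> length xs = d}"
    by (metis image_eqI)
next
  fix u assume "u \<in> Poly ` {xs. set xs \<subseteq> Fq \<and> length xs = d}"
  then obtain xs where xs: "set xs \<subseteq> Fq" "length xs = d" "u = Poly xs"
    by blast
  hence coeff_u: "coeff u j = (if j < d then xs ! j else 0)" for j
    by (simp add: nth_default_def)
  have "over_Fq u"
    using xs(1,2) Fq_closed(1) nth_mem[of _ xs] by (auto simp: over_Fq_def coeff_u)
  moreover have "degree u \<le> d - 1"
    by (rule degree_le) (auto simp: coeff_u)
  ultimately show "u \<in> {u. over_Fq u \<and> degree u < d}"
    using assms by simp
qed

lemma card_polys_over_Fq:
  assumes "d > 0"
  shows "card {u. over_Fq u \<and> degree u < d} = q ^ d"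
    and "finite {u. over_Fq u \<and> degree u < d}"
proof -
  have "inj_on Poly {xs. set xs \<subseteq> Fq \<and> length xs = d}"
    using inj_on_Poly_length[of d] by (rule inj_on_subset) blast
  moreover have "card {xs. set xs \<subseteq> Fq \<and> length xs = d} = q ^ d"
    "finite {xs. set xs \<subseteq> Fq \<and> length xs = d}"
    using card_lists_length_eq[of Fq d] finite_lists_length_eq[of Fq d] by (simp_all add: card_Fq)
  ultimately show "card {u. over_Fq u \<and> degree u < d} = q ^ d"
    and "finite {u. over_Fq u \<and> degree u < d}"
    by (simp_all add: polys_over_Fq_eq_Poly_image[OF assms] card_image)
qed

end

locale subfield_subcode = field_of_order_q2 q p e ty
  for q p e :: nat and ty :: "'a::{field,finite} itself" +
  fixes n :: nat and Z :: "'a set"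
  assumes finite_Z: "finite Z" and roots_Z: "\<forall>\<beta>\<in>Z. \<beta> ^ n = 1"
    and Frobenius_closed_Z: "(\<lambda>\<beta>. \<beta> ^ q) ` Z \<subseteq> Z" and card_Z_less: "card Z < n"
begin

definition message_polys :: "'a poly set" where
  "message_polys = {u. over_Fq u \<and> degree u < n - card Z}"

lemma degree_gen_poly_mult_less:
  assumes "u \<in> message_polys"
  shows "degree (gen_poly Z * u) < n"
  using assms card_Z_less
  by (cases "u = 0") (auto simp: message_polys_def degree_mult_eq gen_poly_nonzero degree_gen_poly finite_Z)

definition check_poly :: "'a poly" where
  "check_poly = (monom 1 n - 1) div gen_poly Z"

lemma gen_poly_mult_check_poly: "monom 1 n - 1 = gen_poly Z * check_poly"
  and check_poly_nonzero: "check_poly \<noteq> 0"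
  and degree_check_poly: "degree check_poly = n - card Z"
  and over_Fq_check_poly: "over_Fq check_poly"
proof -
  show N_eq: "monom 1 n - 1 = gen_poly Z * check_poly"
    using gen_poly_dvd_monom_1_minus_1[OF finite_Z roots_Z] by (simp add: check_poly_def)
  have degN: "degree (monom (1::'a) n - 1) = n"
    using card_Z_less by (intro degree_monom_1_minus_1) simp
  thus "check_poly \<noteq> 0"
    using N_eq card_Z_less by (metis degree_0 mult_zero_right not_less_zero)
  thus "degree check_poly = n - card Z"
    using N_eq degN by (simp add: degree_mult_eq gen_poly_nonzero degree_gen_poly finite_Z)
  show "over_Fq check_poly"
    unfolding check_poly_def
    using over_Fq_div_mod[OF over_Fq_monom_1_minus_1 over_Fq_gen_poly[OF finite_Z Frobenius_closed_Z]]
    by blast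
qed

text \<open>Reducing the message modulo the check polynomial, which has coefficients in \<open>Fq\<close>, shows
  that every codeword is \<open>g u\<close> for a message of low degree.\<close>
lemma cyc_code_sub_eq_image:
  "cyc_code_sub q n Z = (\<lambda>u. coeff (gen_poly Z * u)) ` message_polys"
proof (intro Set.set_eqI iffI)
  let ?g = "gen_poly Z" and ?N = "monom (1::'a) n - 1" and ?h = check_poly
  fix v
  assume "v \<in> cyc_code_sub q n Z"
  then obtain f where v: "v = coeff ((?g * f) mod ?N)" and "\<forall>i. in_subfield q (coeff f i)"
    by (auto simp: cyc_code_sub_def)
  hence "over_Fq (f mod ?h)"
    using over_Fq_div_mod[OF _ over_Fq_check_poly] by (simp add: over_Fq_def Fq_def)
  moreover have "degree (f mod ?h) < n - card Z"
    using degree_mod_less[OF check_poly_nonzero, of f] degree_check_poly card_Z_less by auto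
  ultimately have r: "f mod ?h \<in> message_polys"
    by (simp add: message_polys_def)
  have "?g * f = ?g * (f div ?h * ?h + f mod ?h)"
    by (simp only: div_mult_mod_eq)
  also have "\<dots> = ?g * (f mod ?h) + ?N * (f div ?h)"
    unfolding gen_poly_mult_check_poly distrib_left by (simp only: ac_simps)
  finally have "(?g * f) mod ?N = (?g * (f mod ?h)) mod ?N"
    by simp
  also have "\<dots> = ?g * (f mod ?h)"
    using degree_gen_poly_mult_less[OF r] card_Z_less
    by (intro mod_poly_less) (simp add: degree_monom_1_minus_1)
  finally show "v \<in> (\<lambda>u. coeff (?g * u)) ` message_polys"
    using v r by (metis image_eqI)
next
  fix v
  assume "v \<in> (\<lambda>u. coeff (gen_poly Z * u)) ` message_polys"
  then obtain u where u: "u \<in> message_polys" "v = coeff (gen_poly Z * u)"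
    by blast
  have "(gen_poly Z * u) mod (monom 1 n - 1) = gen_poly Z * u"
    using degree_gen_poly_mult_less[OF u(1)] card_Z_less
    by (intro mod_poly_less) (simp add: degree_monom_1_minus_1)
  moreover have "\<forall>i. in_subfield q (coeff u i)"
    using u(1) by (simp add: message_polys_def over_Fq_def Fq_def)
  ultimately have "gen_poly Z * u \<in>
      {(gen_poly Z * f) mod (monom 1 n - 1) | f. \<forall>i. in_subfield q (coeff f i)}"
    by (intro CollectI exI[of _ u]) simp
  thus "v \<in> cyc_code_sub q n Z"
    unfolding cyc_code_sub_def using u(2) by (rule rev_image_eqI)
qed

lemma card_cyc_code_sub: "card (cyc_code_sub q n Z) = q ^ (n - card Z)"
    and finite_cyc_code_sub: "finite (cyc_code_sub q n Z)"
proof -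
  have "inj_on (\<lambda>u. coeff (gen_poly Z * u)) message_polys"
    by (intro inj_onI) (simp add: coeff_inject gen_poly_nonzero)
  thus "card (cyc_code_sub q n Z) = q ^ (n - card Z)" "finite (cyc_code_sub q n Z)"
    using card_polys_over_Fq[of "n - card Z"] card_Z_less
    by (simp_all add: cyc_code_sub_eq_image card_image message_polys_def)
qed

lemma cyc_code_sub_word:
  assumes "v \<in> cyc_code_sub q n Z"
  shows "\<forall>l\<ge>n. v l = 0" and "\<forall>l. v l \<in> Fq" and "\<forall>\<beta>\<in>Z. eval_word n v \<beta> = 0"
proof -
  obtain u where u: "u \<in> message_polys" "v = coeff (gen_poly Z * u)"
    using assms by (auto simp: cyc_code_sub_eq_image)
  note deg = degree_gen_poly_mult_less[OF u(1)]
  show "\<forall>l\<ge>n. v l = 0"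
    using deg u(2) by (auto intro: coeff_eq_0)
  have "over_Fq (gen_poly Z * u)"
    using u(1) by (intro over_Fq_mult over_Fq_gen_poly finite_Z Frobenius_closed_Z)
      (simp add: message_polys_def)
  thus "\<forall>l. v l \<in> Fq"
    using u(2) by (simp add: over_Fq_def)
  show "\<forall>\<beta>\<in>Z. eval_word n v \<beta> = 0"
  proof
    fix \<beta> assume "\<beta> \<in> Z"
    have "eval_word n v \<beta> = poly (gen_poly Z * u) \<beta>"
      using poly_eq_eval_word[OF deg] by (simp add: u(2))
    also have "\<dots> = 0"
      using poly_gen_poly_eq_0[OF finite_Z \<open>\<beta> \<in> Z\<close>] by simp
    finally show "eval_word n v \<beta> = 0" .
  qed
qed

lemma zero_in_cyc_code_sub: "(\<lambda>_. 0) \<in> cyc_code_sub q n Z"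
proof -
  have "0 \<in> message_polys"
    using card_Z_less by (simp add: message_polys_def over_Fq_def Fq_closed)
  thus ?thesis
    unfolding cyc_code_sub_eq_image by (force simp: zero_poly_def[symmetric])
qed

lemma diff_in_cyc_code_sub:
  assumes "x \<in> cyc_code_sub q n Z" "y \<in> cyc_code_sub q n Z"
  shows "(\<lambda>l. x l - y l) \<in> cyc_code_sub q n Z"
proof -
  obtain u1 u2 where u: "u1 \<in> message_polys" "x = coeff (gen_poly Z * u1)"
    "u2 \<in> message_polys" "y = coeff (gen_poly Z * u2)"
    using assms by (auto simp: cyc_code_sub_eq_image)
  hence "u1 - u2 \<in> message_polys"
    by (auto simp: message_polys_def intro: over_Fq_diff degree_diff_less)
  moreover have "(\<lambda>l. x l - y l) = coeff (gen_poly Z * (u1 - u2))"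
    using u by (simp add: fun_eq_iff right_diff_distrib)
  ultimately show ?thesis
    by (simp add: cyc_code_sub_eq_image)
qed

end

section \<open>Powers of a primitive root of unity and the BCH bound\<close>

locale primitive_root =
  fixes \<alpha> :: "'a::field" and n :: nat
  assumes n_pos: "n > 0" and root: "\<alpha> ^ n = 1"
    and primitive: "\<forall>j. 0 < j \<and> j < n \<longrightarrow> \<alpha> ^ j \<noteq> 1"
begin

abbreviation \<zeta> :: "int \<Rightarrow> 'a" where "\<zeta> \<equiv> rpow \<alpha> n"

lemma power_mod_n: "\<alpha> ^ k = \<alpha> ^ (k mod n)"
  using root by (rule power_mod_of_power_eq_1)

lemma rpow_of_nat: "\<zeta> (int k) = \<alpha> ^ k"
  by (simp add: rpow_def power_mod_n[of k] zmod_int[symmetric])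

lemma rpow_add: "\<zeta> x * \<zeta> y = \<zeta> (x + y)"
proof -
  have "\<zeta> x * \<zeta> y = \<zeta> (int (nat (x mod int n) + nat (y mod int n)))"
    by (simp only: rpow_of_nat) (simp add: rpow_def power_add)
  also have "\<dots> = \<zeta> (x + y)"
    using n_pos by (simp add: rpow_def mod_add_eq)
  finally show ?thesis .
qed

lemma rpow_0: "\<zeta> 0 = 1"
  by (simp add: rpow_def)

lemma rpow_power: "\<zeta> x ^ l = \<zeta> (x * int l)"
  by (induction l) (simp_all add: rpow_0 rpow_add[symmetric] algebra_simps)

lemma rpow_nonzero: "\<zeta> x \<noteq> 0"
  using rpow_add[of x "- x"] by (auto simp: rpow_0)

lemma rpow_eq_1_iff: "\<zeta> x = 1 \<longleftrightarrow> int n dvd x"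
proof
  assume "\<zeta> x = 1"
  moreover have "nat (x mod int n) < n"
    using n_pos by (simp add: nat_less_iff)
  ultimately have "nat (x mod int n) = 0"
    using primitive by (metis rpow_def neq0_conv)
  hence "x mod int n = 0"
    using n_pos by (metis Euclidean_Rings.pos_mod_sign nat_0_iff of_nat_0_less_iff order_antisym_conv)
  thus "int n dvd x"
    by (simp add: dvd_eq_mod_eq_0)
qed (simp add: rpow_def)

lemma rpow_power_n: "\<zeta> x ^ n = 1"
  by (simp add: rpow_power rpow_eq_1_iff)

lemma rpow_eq_iff: "\<zeta> x = \<zeta> y \<longleftrightarrow> int n dvd x - y"
proof -
  have "\<zeta> x = \<zeta> y \<longleftrightarrow> \<zeta> x * \<zeta> (- y) = \<zeta> y * \<zeta> (- y)"
    using rpow_nonzero by (metis mult_right_cancel)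
  also have "\<dots> \<longleftrightarrow> \<zeta> (x - y) = 1"
    by (simp add: rpow_add rpow_0)
  finally show ?thesis
    by (simp add: rpow_eq_1_iff)
qed

lemma dvd_diff_small_eq:
  "int n dvd x - y \<Longrightarrow> \<bar>x - y\<bar> < int n \<Longrightarrow> x = y"
  using dvd_imp_le_int[of "x - y" "int n"] by fastforce

text \<open>The values \<open>\<zeta> (b' l)\<close> on the support are distinct, so this is the Vandermonde
  argument.\<close>
lemma BCH_bound:
  fixes v :: "nat \<Rightarrow> 'a" and z0 b' :: int
  assumes zero: "\<forall>l\<ge>n. v l = 0" and cop: "coprime b' (int n)"
    and zeros: "\<forall>j<N. eval_word n v (\<zeta> (z0 + int j * b')) = 0"
    and light: "weight {..<n} v \<le> N"
  shows "v l = 0"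
proof (rule ccontr)
  assume "v l \<noteq> 0"
  define T where "T = {l\<in>{..<n}. v l \<noteq> 0}"
  have "l \<in> T"
    using \<open>v l \<noteq> 0\<close> zero by (auto simp: T_def not_le[symmetric])
  have inj: "inj_on (\<lambda>l. \<zeta> (b' * int l)) T"
  proof (rule inj_onI)
    fix l1 l2 assume "l1 \<in> T" "l2 \<in> T" "\<zeta> (b' * int l1) = \<zeta> (b' * int l2)"
    hence "int n dvd b' * (int l1 - int l2)" "\<bar>int l1 - int l2\<bar> < int n"
      by (auto simp: T_def rpow_eq_iff right_diff_distrib)
    thus "l1 = l2"
      using cop dvd_diff_small_eq[of "int l1" "int l2"]
      by (simp add: coprime_commute coprime_dvd_mult_right_iff)
  qed
  have sums: "\<forall>j<N. (\<Sum>l\<in>T. v l * \<zeta> (z0 * int l) * \<zeta> (b' * int l) ^ j) = 0"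
  proof (intro allI impI)
    fix j assume "j < N"
    have "(\<Sum>l\<in>T. v l * \<zeta> (z0 * int l) * \<zeta> (b' * int l) ^ j) =
        (\<Sum>l<n. v l * \<zeta> (z0 + int j * b') ^ l)"
      by (rule sum.mono_neutral_cong_left)
        (auto simp: T_def rpow_power rpow_add algebra_simps)
    also have "\<dots> = 0"
      using zeros \<open>j < N\<close> by (simp add: eval_word_def)
    finally show "(\<Sum>l\<in>T. v l * \<zeta> (z0 * int l) * \<zeta> (b' * int l) ^ j) = 0" .
  qed
  have "card T \<le> N"
    using light by (simp add: T_def weight_def)
  hence "v l * \<zeta> (z0 * int l) = 0"
    using vandermonde_solution_zero[OF _ inj _ sums \<open>l \<in> T\<close>] by (simp add: T_def)
  thus False
    using \<open>v l \<noteq> 0\<close> rpow_nonzero by simp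
qed

lemma geometric_word_in_cyc_code_ext:
  assumes fin: "finite A" and roots: "\<forall>\<beta>\<in>A. \<beta> ^ n = 1" and nontrivial: "\<forall>\<beta>\<in>A. \<beta> * \<zeta> z \<noteq> 1"
  shows "(\<lambda>l. if l < n then \<zeta> (z * int l) else 0) \<in> cyc_code_ext n A"
  unfolding cyc_code_ext_eq_zeros[OF n_pos fin roots]
proof (intro CollectI conjI allI ballI impI)
  fix \<beta> assume "\<beta> \<in> A"
  have "eval_word n (\<lambda>l. if l < n then \<zeta> (z * int l) else 0) \<beta> = (\<Sum>l<n. (\<beta> * \<zeta> z) ^ l)"
    by (simp add: eval_word_def rpow_power power_mult_distrib mult.commute)
  also have "\<dots> = 0"
  proof -
    have "(\<beta> * \<zeta> z) ^ n = 1" "\<beta> * \<zeta> z \<noteq> 1"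
      using roots nontrivial \<open>\<beta> \<in> A\<close> by (simp_all add: power_mult_distrib rpow_power_n)
    thus ?thesis
      by (simp add: sum_gp_strict)
  qed
  finally show "eval_word n (\<lambda>l. if l < n then \<zeta> (z * int l) else 0) \<beta> = 0" .
qed simp

text \<open>Pairing with the geometric words above turns a run of non-zeros of the primal code
  into a run of zeros of the dual code, to which the BCH bound applies.\<close>
lemma dual_cyc_code_ext_weight:
  fixes z0 b' :: int
  assumes fin: "finite A" and roots: "\<forall>\<beta>\<in>A. \<beta> ^ n = 1" and cop: "coprime b' (int n)"
    and nonzeros: "\<forall>j<N. \<forall>\<beta>\<in>A. \<beta> * \<zeta> (z0 + int j * b') \<noteq> 1"
    and y: "y \<in> dual_code n (cyc_code_ext n A)" and "y l0 \<noteq> 0"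
  shows "N < weight {..<n} y"
proof (rule ccontr)
  assume "\<not> N < weight {..<n} y"
  hence light: "weight {..<n} y \<le> N"
    by simp
  have orth: "\<forall>x\<in>cyc_code_ext n A. (\<Sum>l<n. x l * y l) = 0"
    using y by (simp add: dual_code_def)
  have zeros: "\<forall>j<N. eval_word n y (\<zeta> (z0 + int j * b')) = 0"
  proof (intro allI impI)
    fix j assume "j < N"
    hence "(\<lambda>l. if l < n then \<zeta> ((z0 + int j * b') * int l) else 0) \<in> cyc_code_ext n A"
      using nonzeros by (intro geometric_word_in_cyc_code_ext fin roots) blast
    from bspec[OF orth this]
    show "eval_word n y (\<zeta> (z0 + int j * b')) = 0"
      by (simp add: eval_word_def rpow_power mult.commute)
  qed
  have "y l0 = 0"
    by (rule BCH_bound[OF _ cop zeros light]) (use y in \<open>simp add: dual_code_def\<close>)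
  with \<open>y l0 \<noteq> 0\<close> show False ..
qed

end

section \<open>A Singleton-type bound for locally repairable codes\<close>

lemma le_of_power_le_mult_power:
  fixes Q M a b :: nat
  assumes "Q ^ a \<le> M * Q ^ b" "b < a" "Q \<ge> 1"
  shows "Q \<le> M"
proof (rule ccontr)
  assume "\<not> Q \<le> M"
  hence "M * Q ^ b < Q ^ Suc b"
    using assms(3) by simp
  also have "\<dots> \<le> Q ^ a"
    using assms(2,3) by (intro power_increasing) auto
  finally show False
    using assms(1) by simp
qed

text \<open>The repair condition on \<open>S\<close> is the linear form of "the restriction of \<open>C\<close> to \<open>S\<close> has
  minimum distance at least \<open>\<delta>\<close>", cf. \<open>min_dist_ge_puncture\<close>.\<close>
locale locally_repairable_code =
  fixes C :: "(nat \<Rightarrow> 'a::ab_group_add) set" and F :: "'a set" and n Q r \<delta> :: nat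
  assumes finite_C: "finite C" and finite_F: "finite F" and card_F: "card F = Q"
    and diff_in_C: "\<And>x y. x \<in> C \<Longrightarrow> y \<in> C \<Longrightarrow> (\<lambda>l. x l - y l) \<in> C"
    and values_in_F: "\<And>x l. x \<in> C \<Longrightarrow> x l \<in> F"
    and zero_beyond_n: "\<And>x l. x \<in> C \<Longrightarrow> l \<ge> n \<Longrightarrow> x l = 0"
    and delta_pos: "\<delta> \<ge> 1"
    and repair_sets: "\<And>a. a < n \<Longrightarrow> \<exists>S. S \<subseteq> {..<n} \<and> a \<in> S \<and> card S \<le> r + \<delta> - 1 \<and>
                        (\<forall>c\<in>C. weight S c < \<delta> \<longrightarrow> (\<forall>l\<in>S. c l = 0))"
begin

definition shortening :: "nat set \<Rightarrow> (nat \<Rightarrow> 'a) set" where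
  "shortening X = {c \<in> C. \<forall>l\<in>X. c l = 0}"

lemma finite_shortening: "finite (shortening X)"
  using finite_C by (simp add: shortening_def)

text \<open>Codewords of \<open>shortening X\<close> with the same value at \<open>a\<close> differ by an element of
  \<open>shortening (insert a X)\<close>.\<close>
lemma card_shortening_insert: "card (shortening X) \<le> card (shortening (insert a X)) * Q"
proof -
  have fibre: "card {c \<in> shortening X. c a = v} \<le> card (shortening (insert a X))" for v
  proof (cases "{c \<in> shortening X. c a = v} = {}")
    case False
    then obtain c0 where c0: "c0 \<in> shortening X" "c0 a = v"
      by auto
    have "inj_on (\<lambda>c l. c l - c0 l) {c \<in> shortening X. c a = v}"
      by (rule inj_onI) (simp add: fun_eq_iff)
    moreover have "(\<lambda>c l. c l - c0 l) ` {c \<in> shortening X. c a = v} \<subseteq> shortening (insert a X)"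
      using c0 by (auto simp: shortening_def intro: diff_in_C)
    ultimately show ?thesis
      using finite_shortening by (rule card_inj_on_le)
  qed (simp only: card.empty zero_le)
  have "(\<lambda>c. c a) ` shortening X \<subseteq> F"
    using values_in_F by (auto simp: shortening_def)
  hence card_values: "card ((\<lambda>c. c a) ` shortening X) \<le> Q"
    using card_mono[OF finite_F] card_F by blast
  have "shortening X = (\<Union>v\<in>(\<lambda>c. c a) ` shortening X. {c \<in> shortening X. c a = v})"
    by auto
  also have "card \<dots> \<le> (\<Sum>v\<in>(\<lambda>c. c a) ` shortening X. card {c \<in> shortening X. c a = v})"
    by (rule card_UN_le) (simp add: finite_shortening)
  also have "\<dots> \<le> card ((\<lambda>c. c a) ` shortening X) * card (shortening (insert a X))"
    using sum_mono[OF fibre] by simp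
  also have "\<dots> \<le> card (shortening (insert a X)) * Q"
    using card_values by simp
  finally show ?thesis .
qed

lemma card_shortening_Un:
  "finite Y \<Longrightarrow> card (shortening X) \<le> card (shortening (X \<union> Y)) * Q ^ card (Y - X)"
proof (induction Y rule: finite_induct)
  case (insert a Y)
  show ?case
  proof (cases "a \<in> X")
    case False
    have "card (shortening X) \<le> card (shortening (X \<union> Y)) * Q ^ card (Y - X)"
      by (rule insert.IH)
    also have "\<dots> \<le> card (shortening (insert a (X \<union> Y))) * Q * Q ^ card (Y - X)"
      using card_shortening_insert by (rule mult_right_mono) simp
    finally show ?thesis
      using False insert.hyps by (simp add: insert_Diff_if mult.assoc)
  next
    case True
    hence "X \<union> insert a Y = X \<union> Y" "insert a Y - X = Y - X"
      by auto
    thus ?thesis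
      using insert.IH by simp
  qed
qed simp

lemma shortening_nonzero:
  assumes "2 \<le> card (shortening X)"
  obtains c where "c \<in> shortening X" "c \<noteq> (\<lambda>_. 0)"
proof -
  have "\<not> shortening X \<subseteq> {\<lambda>_. 0}"
    using assms card_mono[of "{\<lambda>_. 0}" "shortening X"] by auto
  thus ?thesis
    using that by blast
qed

lemma card_repair_set_minus:
  assumes "c \<in> shortening X" "c a \<noteq> 0" "a \<in> S" "finite S"
    and repairs: "\<forall>c\<in>C. weight S c < \<delta> \<longrightarrow> (\<forall>l\<in>S. c l = 0)"
  shows "\<delta> - 1 \<le> card (S - X)"
proof (rule ccontr)
  assume "\<not> ?thesis"
  moreover have "{l\<in>S. c l \<noteq> 0} \<subseteq> S - X"
    using assms(1) by (auto simp: shortening_def)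
  hence "weight S c \<le> card (S - X)"
    unfolding weight_def using assms(4) by (intro card_mono) auto
  ultimately have "weight S c < \<delta>"
    by linarith
  thus False
    using repairs assms(1-3) by (auto simp: shortening_def)
qed

lemma shortening_Un_subset:
  assumes "finite S" and repairs: "\<forall>c\<in>C. weight S c < \<delta> \<longrightarrow> (\<forall>l\<in>S. c l = 0)"
    and T: "T \<subseteq> S - X" "card T = card (S - X) - (\<delta> - 1)" and "\<delta> - 1 \<le> card (S - X)"
  shows "shortening (X \<union> T) \<subseteq> shortening (X \<union> S)"
proof
  fix c assume c: "c \<in> shortening (X \<union> T)"
  have "{l\<in>S. c l \<noteq> 0} \<subseteq> (S - X) - T"
    using c by (auto simp: shortening_def)
  hence "weight S c \<le> card ((S - X) - T)"
    unfolding weight_def using assms(1) by (intro card_mono) auto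
  also have "\<dots> = \<delta> - 1"
    using T assms(1,5) by (simp add: card_Diff_subset finite_subset)
  finally have "weight S c < \<delta>"
    using delta_pos by linarith
  moreover have "c \<in> C"
    using c by (simp add: shortening_def)
  ultimately have "\<forall>l\<in>S. c l = 0"
    using repairs by blast
  thus "c \<in> shortening (X \<union> S)"
    using c by (auto simp: shortening_def)
qed

text \<open>One round of the greedy argument: a repair set \<open>S\<close> of a coordinate where some word of
  \<open>shortening X\<close> is non-zero adds at least \<open>\<delta> - 1\<close> coordinates to \<open>X\<close>, of which all but
  \<open>\<delta> - 1\<close> (at most \<open>r\<close>) may cost a factor \<open>Q\<close>.\<close>
lemma repair_step:
  assumes X: "X \<subseteq> {..<n}" and big: "2 \<le> card (shortening X)"
  obtains X' t where "X' \<subseteq> {..<n}" "card X' = card X + (\<delta> - 1) + t" "t \<le> r"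
    "card (shortening X) \<le> card (shortening X') * Q ^ t"
proof -
  obtain c where c: "c \<in> shortening X" "c \<noteq> (\<lambda>_. 0)"
    using shortening_nonzero[OF big] .
  then obtain a where a: "c a \<noteq> 0"
    by (meson ext)
  have "c \<in> C"
    using c(1) by (simp add: shortening_def)
  hence "a < n"
    using zero_beyond_n[of c a] a by (cases "a < n") auto
  then obtain S where S: "S \<subseteq> {..<n}" "a \<in> S" "card S \<le> r + \<delta> - 1"
      "\<forall>c\<in>C. weight S c < \<delta> \<longrightarrow> (\<forall>l\<in>S. c l = 0)"
    using repair_sets by meson
  have finS: "finite S" and finX: "finite X"
    using S(1) X by (meson finite_lessThan finite_subset)+
  have card_SX: "\<delta> - 1 \<le> card (S - X)"
    using c(1) a S(2) finS S(4) by (rule card_repair_set_minus)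
  obtain T where T: "T \<subseteq> S - X" "card T = card (S - X) - (\<delta> - 1)" "finite T"
    using obtain_subset_with_card_n[of "card (S - X) - (\<delta> - 1)" "S - X"] by auto
  have "card (shortening (X \<union> T)) \<le> card (shortening (X \<union> S))"
    using shortening_Un_subset[OF finS S(4) T(1,2) card_SX] by (rule card_mono[OF finite_shortening])
  moreover have "card (shortening X) \<le> card (shortening (X \<union> T)) * Q ^ card (T - X)"
    by (rule card_shortening_Un[OF T(3)])
  moreover have "T - X = T"
    using T(1) by auto
  ultimately have shrink: "card (shortening X) \<le> card (shortening (X \<union> S)) * Q ^ card T"
    by (metis mult_le_mono1 order.trans)
  have "card (X \<union> S) = card X + card (S - X)"
    using card_Un_disjoint[OF finX finite_Diff[OF finS], of X] by simp
  hence grow: "card (X \<union> S) = card X + (\<delta> - 1) + card T"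
    using T(2) card_SX by linarith
  have "card T \<le> r"
    using T(2) S(3) card_mono[OF finS Diff_subset, of X] by linarith
  moreover have "X \<union> S \<subseteq> {..<n}"
    using X S(1) by blast
  ultimately show ?thesis
    using that grow shrink by blast
qed

lemma greedy_rounds:
  assumes Q: "Q \<ge> 2" and card_C: "card C = Q ^ k" and sr: "s * r < k"
  shows "j \<le> s \<Longrightarrow> \<exists>X t. X \<subseteq> {..<n} \<and> card X = j * (\<delta> - 1) + t \<and> t \<le> j * r \<and>
                 Q ^ k \<le> card (shortening X) * Q ^ t"
proof (induction j)
  case 0
  show ?case
    by (intro exI[of _ "{}"] exI[of _ 0]) (simp add: shortening_def card_C)
next
  case (Suc j)
  then obtain X t where X: "X \<subseteq> {..<n}" "card X = j * (\<delta> - 1) + t" "t \<le> j * r"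
      "Q ^ k \<le> card (shortening X) * Q ^ t"
    by auto
  have "t < k"
    using X(3) Suc.prems sr mult_le_mono1[of j s r] by linarith
  hence "2 \<le> card (shortening X)"
    using le_of_power_le_mult_power[OF X(4)] Q by linarith
  then obtain X' t' where X': "X' \<subseteq> {..<n}" "card X' = card X + (\<delta> - 1) + t'" "t' \<le> r"
      "card (shortening X) \<le> card (shortening X') * Q ^ t'"
    using repair_step[OF X(1)] by blast
  have "Q ^ k \<le> card (shortening X') * Q ^ t' * Q ^ t"
    using X(4) X'(4) by (meson mult_le_mono1 order.trans)
  hence "Q ^ k \<le> card (shortening X') * Q ^ (t + t')"
    by (simp add: power_add mult_ac)
  moreover have "card X' = Suc j * (\<delta> - 1) + (t + t')" "t + t' \<le> Suc j * r"
    using X(2,3) X'(2,3) by simp_all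
  ultimately show ?case
    using X'(1) by blast
qed

lemma weight_le_of_shortening:
  assumes "c \<in> shortening Z" "Z \<subseteq> {..<n}"
  shows "weight {..<n} c \<le> n - card Z"
proof -
  have "{l\<in>{..<n}. c l \<noteq> 0} \<subseteq> {..<n} - Z"
    using assms(1) by (auto simp: shortening_def)
  hence "weight {..<n} c \<le> card ({..<n} - Z)"
    unfolding weight_def by (intro card_mono) auto
  thus ?thesis
    using assms(2) by (simp add: card_Diff_subset finite_subset)
qed

text \<open>After \<open>s\<close> greedy rounds at most \<open>s r < k\<close> dimensions are lost, and padding the
  zero set to \<open>k - 1 + s (\<delta> - 1)\<close> coordinates still leaves a non-zero codeword.\<close>
lemma exists_low_weight_codeword:
  assumes Q: "Q \<ge> 2" and card_C: "card C = Q ^ k" and sr: "s * r < k"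
    and length: "k - 1 + s * (\<delta> - 1) \<le> n"
  shows "\<exists>c\<in>C. c \<noteq> (\<lambda>_. 0) \<and> weight {..<n} c \<le> n - (k - 1 + s * (\<delta> - 1))"
proof -
  obtain X t where X: "X \<subseteq> {..<n}" "card X = s * (\<delta> - 1) + t" "t \<le> s * r"
      "Q ^ k \<le> card (shortening X) * Q ^ t"
    using greedy_rounds[OF Q card_C sr order.refl] by blast
  have finX: "finite X"
    using X(1) by (meson finite_lessThan finite_subset)
  have "card ({..<n} - X) = n - card X"
    using X(1) finX by (simp add: card_Diff_subset)
  hence "k - 1 - t \<le> card ({..<n} - X)"
    using X(2,3) sr length by linarith
  then obtain Y where Y: "Y \<subseteq> {..<n} - X" "card Y = k - 1 - t" "finite Y"
    by (rule obtain_subset_with_card_n)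
  have "Y - X = Y"
    using Y(1) by auto
  hence "card (shortening X) \<le> card (shortening (X \<union> Y)) * Q ^ card Y"
    using card_shortening_Un[OF Y(3), of X] by simp
  hence "Q ^ k \<le> card (shortening (X \<union> Y)) * Q ^ card Y * Q ^ t"
    using X(4) by (meson mult_le_mono1 order.trans)
  also have "\<dots> = card (shortening (X \<union> Y)) * Q ^ (k - 1)"
    using Y(2) X(3) sr by (simp add: power_add[symmetric] mult.assoc)
  finally have "Q \<le> card (shortening (X \<union> Y))"
    by (rule le_of_power_le_mult_power) (use Q sr in linarith)+
  hence "2 \<le> card (shortening (X \<union> Y))"
    using Q by linarith
  then obtain c where c: "c \<in> shortening (X \<union> Y)" "c \<noteq> (\<lambda>_. 0)"
    by (rule shortening_nonzero)
  have "X \<union> Y \<subseteq> {..<n}"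
    using X(1) Y(1) by blast
  hence "weight {..<n} c \<le> n - card (X \<union> Y)"
    by (rule weight_le_of_shortening[OF c(1)])
  moreover have "card (X \<union> Y) = card X + card Y"
    using Y(1,3) finX by (intro card_Un_disjoint) auto
  moreover have "card X + card Y = k - 1 + s * (\<delta> - 1)"
    using X(2,3) Y(2) sr by linarith
  ultimately have "weight {..<n} c \<le> n - (k - 1 + s * (\<delta> - 1))"
    by simp
  moreover have "c \<in> C"
    using c(1) by (simp add: shortening_def)
  ultimately show ?thesis
    using c(2) by blast
qed

end

section \<open>The codes of the construction\<close>

locale LRC_construction = field_of_order_q2 q p e ty + primitive_root \<alpha> n
  for q p e :: nat and ty :: "'a::{field,finite} itself" and \<alpha> :: 'a and n :: nat +
  fixes b s m t \<delta> :: nat and i :: "nat \<Rightarrow> int" and A B :: "'a set"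
  assumes delta: "\<delta> \<ge> 2" "even \<delta>"
    and pos: "s > 0" "m > 0"
    and coprime_b_n: "coprime b n"
    and i_first: "int m - 1 + int \<delta> \<le> i 1"
    and i_last: "i s \<le> int n - int \<delta>"
    and i_gap: "\<forall>l. 1 \<le> l \<and> l < s \<longrightarrow> i (l + 1) - i l \<ge> int \<delta>"
    and A_def: "A = {rpow \<alpha> n (int t + int j * int b) | j. j \<le> m - 1}
                 \<union> {rpow \<alpha> n (int t + i l * int b) | l. 1 \<le> l \<and> l \<le> s}"
    and B_def: "B = {rpow \<alpha> n (j * int b) | j::int.
                    - ((int \<delta> - 2) div 2) \<le> j \<and> j \<le> (int \<delta> - 2) div 2}"
    and cyclotomic: "\<forall>j<n. \<alpha> ^ j \<in> setmult A B \<longrightarrow> \<alpha> ^ ((j * q) mod n) \<in> setmult A B"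
begin

definition h :: int where "h = (int \<delta> - 2) div 2"

definition E :: "int \<Rightarrow> 'a" where "E j = \<zeta> (int t + j * int b)"

text \<open>The exponents \<open>j\<close> with \<open>E j \<in> A B\<close>: \<open>B\<close> widens each exponent of \<open>A\<close> by \<open>\<plusminus>h\<close>.\<close>
definition J :: "int set" where
  "J = {-h .. int m - 1 + h} \<union> (\<Union>l\<in>{1..s}. {i l - h .. i l + h})"

lemma delta_eq_h: "int \<delta> = 2 * h + 2" "h \<ge> 0"
  using delta unfolding h_def by (auto elim!: evenE)

lemma i_increasing:
  assumes "1 \<le> l" "l \<le> l'" "l' \<le> s"
  shows "i l' - i l \<ge> int (l' - l) * int \<delta>"
  using assms
proof (induction l')
  case (Suc k)
  show ?case
  proof (cases "l = Suc k")
    case False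
    hence "l \<le> k" "k < s"
      using Suc.prems by auto
    moreover have "i (k + 1) - i k \<ge> int \<delta>"
      using i_gap Suc.prems \<open>l \<le> k\<close> by auto
    ultimately show ?thesis
      using Suc.IH Suc.prems by (simp add: of_nat_diff algebra_simps)
  qed simp
qed simp

lemma i_gap_less:
  assumes "1 \<le> l" "l < l'" "l' \<le> s"
  shows "i l + int \<delta> \<le> i l'"
proof -
  have "1 \<le> int (l' - l)"
    using assms by simp
  hence "int \<delta> \<le> int (l' - l) * int \<delta>"
    using mult_right_mono[of 1 "int (l' - l)" "int \<delta>"] by simp
  thus ?thesis
    using i_increasing[of l l'] assms by simp
qed

lemma i_bounds:
  assumes "1 \<le> l" "l \<le> s"
  shows "int m - 1 + int \<delta> \<le> i l" "i l \<le> int n - int \<delta>"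
proof -
  have "i l - i 1 \<ge> int (l - 1) * int \<delta>" "i s - i l \<ge> int (s - l) * int \<delta>"
    using i_increasing[of 1 l] i_increasing[of l s] assms by simp_all
  moreover have "int (l - 1) * int \<delta> \<ge> 0" "int (s - l) * int \<delta> \<ge> 0"
    by simp_all
  ultimately show "int m - 1 + int \<delta> \<le> i l" "i l \<le> int n - int \<delta>"
    using i_first i_last by linarith+
qed

lemma n_ge: "int m - 1 + 2 * int \<delta> \<le> int n"
  using i_bounds[of s] pos by simp

lemma J_bounds: "j \<in> J \<Longrightarrow> -h \<le> j \<and> j \<le> int n - h - 2"
proof -
  assume "j \<in> J"
  then consider "j \<in> {-h .. int m - 1 + h}" | l where "l \<in> {1..s}" "j \<in> {i l - h .. i l + h}"
    unfolding J_def by blast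
  thus ?thesis
  proof cases
    case 1
    thus ?thesis
      using n_ge delta_eq_h by auto
  next
    case 2
    thus ?thesis
      using i_bounds[of l] delta_eq_h by auto
  qed
qed

lemma E_eq_iff: "E x = E y \<longleftrightarrow> int n dvd x - y"
proof -
  have "E x = E y \<longleftrightarrow> int n dvd int b * (x - y)"
    by (simp add: E_def rpow_eq_iff algebra_simps)
  also have "\<dots> \<longleftrightarrow> int n dvd x - y"
    using coprime_b_n by (simp add: coprime_commute coprime_dvd_mult_right_iff)
  finally show ?thesis .
qed

lemma inj_on_E: "inj_on E J"
proof (rule inj_onI)
  fix x y assume "x \<in> J" "y \<in> J" "E x = E y"
  thus "x = y"
    using J_bounds[of x] J_bounds[of y] dvd_diff_small_eq[of x y] by (auto simp: E_eq_iff)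
qed

lemma E_mult_B: "E x * \<zeta> (y * int b) = E (x + y)"
  unfolding E_def rpow_add by (simp add: algebra_simps)

lemma A_eq: "A = E ` (int ` {..m-1} \<union> i ` {1..s})"
  unfolding A_def E_def by auto

lemma B_eq: "B = (\<lambda>j. \<zeta> (j * int b)) ` {-h..h}"
  unfolding B_def h_def by auto

lemma J_decompose:
  assumes "j \<in> J"
  obtains j1 where "E j1 \<in> A" "-h \<le> j - j1" "j - j1 \<le> h"
proof (cases "j \<le> int m - 1 + h")
  case True
  define j1 where "j1 = max 0 (min (int m - 1) j)"
  have "E j1 \<in> A"
    unfolding A_eq j1_def using pos by (intro imageI UnI1) (auto intro!: image_eqI[of _ _ "nat _"])
  moreover have "-h \<le> j - j1" "j - j1 \<le> h"
    using True J_bounds[OF assms] delta_eq_h by (auto simp: j1_def)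
  ultimately show ?thesis
    using that by blast
next
  case False
  then obtain l where "l \<in> {1..s}" "j \<in> {i l - h .. i l + h}"
    using assms by (auto simp: J_def)
  moreover have "E (i l) \<in> A"
    unfolding A_eq using \<open>l \<in> {1..s}\<close> by auto
  ultimately show ?thesis
    using that by auto
qed

lemma AB_eq: "setmult A B = E ` J"
proof (intro Set.set_eqI iffI)
  fix x assume "x \<in> setmult A B"
  then obtain a j2 where x: "x = a * \<zeta> (j2 * int b)" "a \<in> A" "-h \<le> j2" "j2 \<le> h"
    by (auto simp: setmult_def B_eq)
  from x(2) consider j where "j \<le> m - 1" "a = E (int j)" | l where "l \<in> {1..s}" "a = E (i l)"
    by (auto simp: A_eq)
  thus "x \<in> E ` J"
  proof cases
    case 1
    hence "int j + j2 \<in> J"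
      using x pos by (auto simp: J_def)
    thus ?thesis
      using x 1 by (metis E_mult_B image_eqI)
  next
    case 2
    hence "i l + j2 \<in> {i l - h .. i l + h}"
      using x by auto
    hence "i l + j2 \<in> J"
      unfolding J_def using 2 by blast
    thus ?thesis
      using x 2 by (metis E_mult_B image_eqI)
  qed
next
  fix x assume "x \<in> E ` J"
  then obtain j where j: "j \<in> J" "x = E j"
    by auto
  obtain j1 where "E j1 \<in> A" "-h \<le> j - j1" "j - j1 \<le> h"
    using J_decompose[OF j(1)] by blast
  moreover have "\<zeta> ((j - j1) * int b) \<in> B"
    unfolding B_eq using calculation by auto
  moreover have "x = E j1 * \<zeta> ((j - j1) * int b)"
    using j E_mult_B by simp
  ultimately show "x \<in> setmult A B"
    by (auto simp: setmult_def)
qed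

lemma card_J: "card J = m - 1 + (s + 1) * (\<delta> - 1)"
proof -
  define J0 where "J0 = {-h .. int m - 1 + h}"
  define J1 where "J1 = (\<Union>l\<in>{1..s}. {i l - h .. i l + h})"
  have disjoint: "{i l - h .. i l + h} \<inter> {i l' - h .. i l' + h} = {}"
    if "l \<in> {1..s}" "l' \<in> {1..s}" "l \<noteq> l'" for l l'
  proof (cases "l < l'")
    case True
    thus ?thesis
      using i_gap_less[of l l'] that delta_eq_h by auto
  next
    case False
    thus ?thesis
      using i_gap_less[of l' l] that delta_eq_h by auto
  qed
  have "card J1 = (\<Sum>l\<in>{1..s}. card {i l - h .. i l + h})"
    unfolding J1_def by (rule card_UN_disjoint) (use disjoint in auto)
  also have "\<dots> = (\<Sum>l\<in>{1..s}. 2 * nat h + 1)"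
    by (rule sum.cong) (use delta_eq_h in auto)
  finally have card_J1: "card J1 = s * (2 * nat h + 1)"
    by simp
  have "\<forall>l\<in>{1..s}. int m - 1 + h < i l - h"
    using i_bounds delta_eq_h by fastforce
  hence "J0 \<inter> J1 = {}"
    unfolding J0_def J1_def by fastforce
  hence "card J = card J0 + card J1"
    unfolding J_def J0_def[symmetric] J1_def[symmetric] by (intro card_Un_disjoint) (auto simp: J0_def J1_def)
  moreover have "card J0 = m + 2 * nat h"
    using delta_eq_h pos by (simp add: J0_def)
  moreover have "\<delta> - 1 = 2 * nat h + 1"
    using delta_eq_h by linarith
  ultimately show ?thesis
    using card_J1 pos by (simp add: algebra_simps)
qed

lemma card_AB: "card (setmult A B) = m - 1 + (s + 1) * (\<delta> - 1)"
  using AB_eq card_image[OF inj_on_E] card_J by simp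

lemma card_AB_less: "card (setmult A B) < n"
proof -
  have "card J \<le> card {-h .. int n - h - 2}"
    using J_bounds by (intro card_mono) auto
  thus ?thesis
    using AB_eq card_image[OF inj_on_E] n_pos by simp
qed

lemma AB_roots: "\<beta> \<in> setmult A B \<Longrightarrow> \<beta> ^ n = 1"
  using AB_eq rpow_power_n by (auto simp: E_def)

text \<open>This is where the hypothesis that \<open>A B\<close> is a union of \<open>q\<close>-cyclotomic cosets enters.\<close>
lemma AB_Frobenius_closed: "(\<lambda>\<beta>. \<beta> ^ q) ` setmult A B \<subseteq> setmult A B"
proof clarify
  fix \<beta> assume "\<beta> \<in> setmult A B"
  then obtain j where "\<beta> = E j"
    using AB_eq by auto
  define k where "k = nat ((int t + j * int b) mod int n)"
  have "\<beta> = \<alpha> ^ k" "k < n"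
    using \<open>\<beta> = E j\<close> n_pos by (simp_all add: E_def rpow_def k_def nat_less_iff)
  moreover have "\<alpha> ^ ((k * q) mod n) = \<beta> ^ q"
    using \<open>\<beta> = \<alpha> ^ k\<close> power_mod_n[of "k * q"] by (simp add: power_mult)
  ultimately show "\<beta> ^ q \<in> setmult A B"
    using cyclotomic \<open>\<beta> \<in> setmult A B\<close> by metis
qed

sublocale AB: subfield_subcode q p e ty n "setmult A B"
  using AB_eq card_AB_less AB_roots AB_Frobenius_closed by unfold_locales simp_all

abbreviation C_AB :: "(nat \<Rightarrow> 'a) set" where "C_AB \<equiv> cyc_code_sub q n (setmult A B)"

abbreviation D_A :: "(nat \<Rightarrow> 'a) set" where "D_A \<equiv> dual_code n (cyc_code_ext n A)"

abbreviation locality :: nat where "locality \<equiv> min_dist n D_A + 1 - \<delta>"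

lemma coprime_int_b_n: "coprime (int b) (int n)"
  using coprime_b_n by simp

lemma A_roots: "\<beta> \<in> A \<Longrightarrow> \<beta> ^ n = 1"
  using A_eq rpow_power_n by (auto simp: E_def)

lemma finite_A: "finite A"
  by simp

lemma cyc_code_ext_A: "cyc_code_ext n A = {v. (\<forall>l\<ge>n. v l = 0) \<and> (\<forall>\<beta>\<in>A. eval_word n v \<beta> = 0)}"
  using cyc_code_ext_eq_zeros[OF n_pos finite_A] A_roots by blast

text \<open>The zeros \<open>E j\<close>, \<open>-h \<le> j \<le> m - 1 + h\<close>, of \<open>C_AB\<close> are \<open>m + \<delta> - 2\<close> consecutive powers
  of \<open>\<zeta> b\<close>.\<close>
lemma weight_C_AB_ge:
  assumes c: "c \<in> C_AB" and "c l0 \<noteq> 0"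
  shows "m + \<delta> - 1 \<le> weight {..<n} c"
proof (rule ccontr)
  assume "\<not> ?thesis"
  hence "weight {..<n} c \<le> m + \<delta> - 2"
    by linarith
  moreover have "\<forall>j<m + \<delta> - 2. eval_word n c (\<zeta> (int t - h * int b + int j * int b)) = 0"
  proof (intro allI impI)
    fix j assume "j < m + \<delta> - 2"
    hence "int j - h \<in> J"
      using delta_eq_h pos by (auto simp: J_def)
    hence "E (int j - h) \<in> setmult A B"
      using AB_eq by blast
    thus "eval_word n c (\<zeta> (int t - h * int b + int j * int b)) = 0"
      using AB.cyc_code_sub_word(3)[OF c] by (simp add: E_def algebra_simps)
  qed
  ultimately have "c l0 = 0"
    using BCH_bound[OF AB.cyc_code_sub_word(1)[OF c] coprime_int_b_n] by blast
  with \<open>c l0 \<noteq> 0\<close> show False ..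
qed

text \<open>No element of \<open>A\<close> is inverse to \<open>\<zeta> (- (t + (m + j) b))\<close> for \<open>j < \<delta> - 1\<close>: the gap between
  the exponents \<open>m - 1\<close> and \<open>i 1\<close> is a run of \<open>\<delta> - 1\<close> non-zeros of the code with defining set \<open>A\<close>.\<close>
lemma weight_D_A_ge:
  assumes y: "y \<in> D_A" and "y l0 \<noteq> 0"
  shows "\<delta> \<le> weight {..<n} y"
proof -
  have nonzeros: "\<forall>j<\<delta> - 1. \<forall>\<beta>\<in>A. \<beta> * \<zeta> (- (int t + int m * int b) + int j * - int b) \<noteq> 1"
  proof (intro allI impI ballI)
    fix j \<beta> assume "j < \<delta> - 1" "\<beta> \<in> A"
    from \<open>\<beta> \<in> A\<close> consider j' where "j' \<le> m - 1" "\<beta> = E (int j')"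
      | l where "1 \<le> l" "l \<le> s" "\<beta> = E (i l)"
      unfolding A_eq by auto
    then obtain x where x: "\<beta> = E x" "x - int m - int j \<noteq> 0" "\<bar>x - int m - int j\<bar> < int n"
    proof cases
      case 1
      show ?thesis
        by (rule that[of "int j'"]) (use 1 \<open>j < \<delta> - 1\<close> n_ge pos in auto)
    next
      case 2
      show ?thesis
        by (rule that[of "i l"]) (use 2 \<open>j < \<delta> - 1\<close> i_bounds[of l] pos in auto)
    qed
    have "\<beta> * \<zeta> (- (int t + int m * int b) + int j * - int b) = \<zeta> (int b * (x - int m - int j))"
      by (simp add: x(1) E_def rpow_add algebra_simps)
    moreover have "\<not> int n dvd x - int m - int j"
      using x(2,3) dvd_diff_small_eq[of "x - int m - int j" 0] by auto
    hence "\<not> int n dvd int b * (x - int m - int j)"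
      using coprime_int_b_n by (simp add: coprime_commute coprime_dvd_mult_right_iff)
    ultimately show "\<beta> * \<zeta> (- (int t + int m * int b) + int j * - int b) \<noteq> 1"
      by (simp add: rpow_eq_1_iff)
  qed
  have "coprime (- int b) (int n)"
    using coprime_int_b_n by simp
  hence "\<delta> - 1 < weight {..<n} y"
    using A_roots by (intro dual_cyc_code_ext_weight[OF finite_A _ _ nonzeros y \<open>y l0 \<noteq> 0\<close>]) auto
  thus ?thesis
    by linarith
qed

lemma min_dist_D_A: "\<delta> \<le> min_dist n D_A" "\<exists>z\<in>D_A. z \<noteq> (\<lambda>_. 0) \<and> weight {..<n} z = min_dist n D_A"
proof -
  define y0 where "y0 = (\<lambda>l. if l < n then E 0 ^ l else 0)"
  have "E 0 \<in> A"
    unfolding A_eq by force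
  hence y0: "y0 \<in> D_A"
    by (simp add: y0_def dual_code_def cyc_code_ext_A eval_word_def)
  moreover have "y0 \<noteq> (\<lambda>_. 0)"
    using n_pos by (auto simp: y0_def fun_eq_iff)
  ultimately show "\<exists>z\<in>D_A. z \<noteq> (\<lambda>_. 0) \<and> weight {..<n} z = min_dist n D_A"
    using min_dist_attained[of D_A y0 "\<lambda>_. 0" n] diff_in_dual_code zero_in_dual_code by blast
  then obtain z l where "z \<in> D_A" "z l \<noteq> 0" "weight {..<n} z = min_dist n D_A"
    by (auto simp: fun_eq_iff)
  thus "\<delta> \<le> min_dist n D_A"
    using weight_D_A_ge by metis
qed

lemma twisted_codeword:
  assumes c: "c \<in> C_AB" and x: "-h \<le> x" "x \<le> h"
  shows "(\<lambda>l. if l < n then c l * \<zeta> (x * int b) ^ l else 0) \<in> cyc_code_ext n A"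
  unfolding cyc_code_ext_A
proof (intro CollectI conjI allI ballI impI)
  fix \<beta> assume "\<beta> \<in> A"
  have "\<zeta> (x * int b) \<in> B"
    unfolding B_eq using x by auto
  hence "\<beta> * \<zeta> (x * int b) \<in> setmult A B"
    using \<open>\<beta> \<in> A\<close> unfolding setmult_def by blast
  hence "eval_word n c (\<beta> * \<zeta> (x * int b)) = 0"
    using AB.cyc_code_sub_word(3)[OF c] by blast
  thus "eval_word n (\<lambda>l. if l < n then c l * \<zeta> (x * int b) ^ l else 0) \<beta> = 0"
    unfolding eval_word_def by (simp add: power_mult_distrib mult_ac)
qed simp

text \<open>Since \<open>A B\<close> contains \<open>A\<close> shifted by every element of \<open>B\<close>, the componentwise product of a
  codeword of \<open>C_AB\<close> with a dual codeword of the code with defining set \<open>A\<close> has the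
  \<open>\<delta> - 1\<close> consecutive zeros \<open>\<zeta> (x b)\<close>, \<open>-h \<le> x \<le> h\<close>.\<close>
lemma product_zeros:
  assumes c: "c \<in> C_AB" and y: "y \<in> D_A"
  shows "\<forall>j<\<delta> - 1. eval_word n (\<lambda>l. c l * y l) (\<zeta> (- h * int b + int j * int b)) = 0"
proof (intro allI impI)
  fix j assume "j < \<delta> - 1"
  define x where "x = int j - h"
  have "-h \<le> x" "x \<le> h"
    using \<open>j < \<delta> - 1\<close> delta_eq_h by (auto simp: x_def)
  hence "(\<lambda>l. if l < n then c l * \<zeta> (x * int b) ^ l else 0) \<in> cyc_code_ext n A"
    by (rule twisted_codeword[OF c])
  moreover have "\<forall>x\<in>cyc_code_ext n A. (\<Sum>l<n. x l * y l) = 0"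
    using y by (simp add: dual_code_def)
  ultimately have "(\<Sum>l<n. (if l < n then c l * \<zeta> (x * int b) ^ l else 0) * y l) = 0"
    by (simp only: Ball_def)
  moreover have "- h * int b + int j * int b = x * int b"
    by (simp add: x_def algebra_simps)
  ultimately show "eval_word n (\<lambda>l. c l * y l) (\<zeta> (- h * int b + int j * int b)) = 0"
    by (simp add: eval_word_def mult_ac)
qed

text \<open>A minimum-weight dual codeword, cyclically shifted to cover \<open>i0\<close>, has a support on which
  every light codeword of \<open>C_AB\<close> vanishes.\<close>
lemma repair_set:
  assumes "i0 < n"
  shows "\<exists>S. S \<subseteq> {..<n} \<and> i0 \<in> S \<and> card S \<le> locality + \<delta> - 1 \<and>
           (\<forall>c\<in>C_AB. weight S c < \<delta> \<longrightarrow> (\<forall>l\<in>S. c l = 0))"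
proof -
  obtain z where z: "z \<in> D_A" "z \<noteq> (\<lambda>_. 0)" "weight {..<n} z = min_dist n D_A"
    using min_dist_D_A(2) by blast
  then obtain a where "z a \<noteq> 0"
    by (meson ext)
  hence "a < n"
    using z(1) by (auto simp: dual_code_def not_le[symmetric])
  define k where "k = a + (n - i0)"
  define z' where "z' = (\<lambda>l. if l < n then z ((l + k) mod n) else 0)"
  define S where "S = {l. l < n \<and> z' l \<noteq> 0}"
  have z': "z' \<in> D_A"
    unfolding z'_def using n_pos finite_A A_roots z(1) by (intro dual_cyc_code_ext_shift) auto
  have "(i0 + k) mod n = a"
    using \<open>i0 < n\<close> \<open>a < n\<close> by (simp add: k_def)
  hence "i0 \<in> S"
    using \<open>z a \<noteq> 0\<close> \<open>i0 < n\<close> by (simp add: S_def z'_def)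
  have "inj_on (\<lambda>l. (l + k) mod n) S"
    using bij_betw_add_mod[OF n_pos, of k] by (auto simp: S_def bij_betw_def intro: inj_on_subset)
  moreover have "(\<lambda>l. (l + k) mod n) ` S \<subseteq> {l\<in>{..<n}. z l \<noteq> 0}"
    by (auto simp: S_def z'_def)
  ultimately have "card S \<le> weight {..<n} z"
    unfolding weight_def by (rule card_inj_on_le) simp
  hence "card S \<le> locality + \<delta> - 1"
    using z(3) min_dist_D_A(1) delta by linarith
  moreover have "\<forall>l\<in>S. c l = 0" if c: "c \<in> C_AB" "weight S c < \<delta>" for c
  proof -
    have "weight {..<n} (\<lambda>l. c l * z' l) = weight S c"
      unfolding weight_def by (rule arg_cong[where f = card]) (auto simp: S_def)
    hence "\<forall>l. c l * z' l = 0"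
      using BCH_bound[OF _ coprime_int_b_n product_zeros[OF c(1) z']] c(2)
        AB.cyc_code_sub_word(1)[OF c(1)] by auto
    thus ?thesis
      by (auto simp: S_def)
  qed
  moreover have "S \<subseteq> {..<n}"
    by (auto simp: S_def)
  ultimately show ?thesis
    using \<open>i0 \<in> S\<close> by blast
qed

lemma is_LRC_C_AB: "is_LRC n C_AB locality \<delta>"
proof -
  have "has_locality n C_AB locality \<delta> i0" if "i0 < n" for i0
  proof -
    obtain S where S: "S \<subseteq> {..<n}" "i0 \<in> S" "card S \<le> locality + \<delta> - 1"
        "\<forall>c\<in>C_AB. weight S c < \<delta> \<longrightarrow> (\<forall>l\<in>S. c l = 0)"
      using repair_set[OF \<open>i0 < n\<close>] by meson
    moreover have "min_dist_ge S (puncture S C_AB) \<delta>"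
      by (rule min_dist_ge_puncture[OF AB.diff_in_cyc_code_sub S(4)])
    ultimately show ?thesis
      unfolding has_locality_def by blast
  qed
  thus ?thesis
    unfolding is_LRC_def using min_dist_D_A(1) delta by auto
qed

lemma card_C_AB: "card C_AB = q ^ (n - card (setmult A B))"
  using AB.card_cyc_code_sub .

lemma dimension_C_AB: "int (n - card (setmult A B)) = int n - int m + 1 - (int s + 1) * (int \<delta> - 1)"
proof -
  have "int (card (setmult A B)) = int (m - 1) + (int s + 1) * int (\<delta> - 1)"
    using card_AB by (simp add: distrib_right)
  also have "\<dots> = int m - 1 + (int s + 1) * (int \<delta> - 1)"
    using pos delta by (simp add: of_nat_diff)
  finally show ?thesis
    using card_AB_less by (simp add: of_nat_diff)
qed

lemma length_eq: "n - (n - card (setmult A B) - 1 + s * (\<delta> - 1)) = m + \<delta> - 1"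
  and length_le: "n - card (setmult A B) - 1 + s * (\<delta> - 1) \<le> n"
proof -
  have "(s + 1) * (\<delta> - 1) = s * (\<delta> - 1) + (\<delta> - 1)"
    by (simp only: distrib_right mult_1)
  hence "card (setmult A B) + 2 = m + \<delta> + s * (\<delta> - 1)"
    using card_AB pos delta by linarith
  thus "n - (n - card (setmult A B) - 1 + s * (\<delta> - 1)) = m + \<delta> - 1"
    "n - card (setmult A B) - 1 + s * (\<delta> - 1) \<le> n"
    using card_AB_less by linarith+
qed

text \<open>The BCH bound gives \<open>\<ge>\<close>; the Singleton-type bound for locally repairable codes gives
  \<open>\<le>\<close> as soon as \<open>s r < k\<close>.\<close>
lemma min_dist_C_AB:
  assumes "s * locality < n - card (setmult A B)"
  shows "min_dist n C_AB = m + \<delta> - 1"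
proof -
  interpret LRC: locally_repairable_code C_AB Fq n q locality \<delta>
  proof
    fix a assume "a < n"
    thus "\<exists>S. S \<subseteq> {..<n} \<and> a \<in> S \<and> card S \<le> locality + \<delta> - 1 \<and>
        (\<forall>c\<in>C_AB. weight S c < \<delta> \<longrightarrow> (\<forall>l\<in>S. c l = 0))"
      by (rule repair_set)
  qed (use AB.finite_cyc_code_sub AB.diff_in_cyc_code_sub AB.cyc_code_sub_word card_Fq delta in auto)
  obtain c where c: "c \<in> C_AB" "c \<noteq> (\<lambda>_. 0)" "weight {..<n} c \<le> m + \<delta> - 1"
    using LRC.exists_low_weight_codeword[OF q_ge_2 card_C_AB assms length_le] length_eq by auto
  hence "min_dist n C_AB \<le> m + \<delta> - 1"
    using min_dist_le_weight[OF AB.zero_in_cyc_code_sub c(1,2), of n] by linarith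
  moreover obtain z where "z \<in> C_AB" "z \<noteq> (\<lambda>_. 0)" "weight {..<n} z = min_dist n C_AB"
    using min_dist_attained[OF AB.diff_in_cyc_code_sub c(1) AB.zero_in_cyc_code_sub c(2)] by blast
  hence "m + \<delta> - 1 \<le> min_dist n C_AB"
    using weight_C_AB_ge by (metis ext)
  ultimately show ?thesis
    by simp
qed

end

lemma mult_less_of_ceiling_divide_eq:
  assumes "\<lceil>real k / real r\<rceil> = int s + 1" and "r > 0"
  shows "s * r < k"
proof -
  have "real s < real k / real r"
    using assms(1) by (simp add: ceiling_eq_iff)
  hence "real (s * r) < real k"
    using assms(2) by (simp add: pos_less_divide_eq)
  thus ?thesis
    by (simp only: of_nat_less_iff)
qed

theorem theorem5p1:
  fixes q n b s m t \<delta> :: nat and i :: "nat \<Rightarrow> int" and \<alpha> :: "'a::{field,finite}"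
  assumes q_pp: "\<exists>p e. prime p \<and> e > 0 \<and> q = p ^ e"
    and card_F: "card (UNIV :: 'a set) = q ^ 2"
    and n_dvd: "n dvd q + 1"
    and prim: "\<alpha> ^ n = 1" "\<forall>j. 0 < j \<and> j < n \<longrightarrow> \<alpha> ^ j \<noteq> 1"
    and delta: "\<delta> \<ge> 2" "even \<delta>"
    and pos: "b > 0" "s > 0" "m > 0"
    and cop: "coprime b n"
    and t_lt: "t < n"
    and i_first: "int m - 1 + int \<delta> \<le> i 1"
    and i_last: "i s \<le> int n - int \<delta>"
    and i_gap: "\<forall>l. 1 \<le> l \<and> l < s \<longrightarrow> i (l + 1) - i l \<ge> int \<delta>"
    and A_def: "A = {rpow \<alpha> n (int t + int j * int b) | j. j \<le> m - 1}
                 \<union> {rpow \<alpha> n (int t + i l * int b) | l. 1 \<le> l \<and> l \<le> s}"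
    and B_def: "B = {rpow \<alpha> n (j * int b) | j::int.
                    - ((int \<delta> - 2) div 2) \<le> j \<and> j \<le> (int \<delta> - 2) div 2}"
    and cyclo: "\<forall>j<n. \<alpha> ^ j \<in> setmult A B \<longrightarrow> \<alpha> ^ ((j * q) mod n) \<in> setmult A B"
    and dA: "dA = min_dist n (dual_code n (cyc_code_ext n A))"
    and C_def: "C = cyc_code_sub q n (setmult A B)"
    and r_def: "r = dA + 1 - \<delta>"
  shows "is_LRC n C r \<delta> \<and>
         (\<exists>k. card C = q ^ k \<and> int k = int n - int m + 1 - (int s + 1) * (int \<delta> - 1) \<and>
              (\<lceil>real k / real r\<rceil> = int s + 1 \<longrightarrow>
                 min_dist n C = m + \<delta> - 1 \<and> is_optimal_LRC n C k r \<delta> (min_dist n C)))"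
proof -
  obtain p e where "prime p" "e > 0" "q = p ^ e"
    using q_pp by blast
  moreover have "n > 0"
    using n_dvd by (intro gr0I) simp
  ultimately interpret LRC_construction q p e "TYPE('a)" \<alpha> n b s m t \<delta> i A B
    using card_F prim delta pos cop i_first i_last i_gap A_def B_def cyclo by unfold_locales auto
  define k where "k = n - card (setmult A B)"
  have LRC: "is_LRC n C r \<delta>"
    using is_LRC_C_AB by (simp add: C_def r_def dA)
  moreover have "min_dist n C = m + \<delta> - 1 \<and> is_optimal_LRC n C k r \<delta> (min_dist n C)"
    if ceiling: "\<lceil>real k / real r\<rceil> = int s + 1"
  proof -
    have "s * r < k"
      using ceiling LRC by (intro mult_less_of_ceiling_divide_eq) (auto simp: is_LRC_def)
    hence "min_dist n C = m + \<delta> - 1"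
      using min_dist_C_AB by (simp add: C_def r_def dA k_def)
    thus ?thesis
      using LRC ceiling dimension_C_AB delta pos
      by (simp add: is_optimal_LRC_def k_def of_nat_diff algebra_simps)
  qed
  ultimately show ?thesis
    using card_C_AB dimension_C_AB by (auto simp: C_def k_def)
qed
end
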